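(* Let $\theta\colon\mathbb F(A)\curvearrowright\Omega$ be a convex subshift over a finite alphabet $A$ and $n\ge1$. Let $\Psi_n\colon\mathbb F^{[n:\Omega]}\to\mathbb F(A)$ be the homomorphism $[B\xleftarrow{a}B']\mapsto a$ and $\psi_n\colon\Omega^{[n]}\to\Omega$, $\psi_n(\eta)=\{\Psi_n(\beta):\beta\in\eta\}$. Then $(\psi_n,\Psi_n)$ is a direct dynamical equivalence $\theta^{[n]}\xrightarrow{\approx}\theta$. In particular, every convex subshift of finite type is directly dynamically equivalent to a $1$-step convex subshift.
   Context: Convex subshifts. Let $A$ be a finite alphabet, $\mathbb F=\mathbb F(A)$. $\mathcal C=\mathcal C(A)$ is the set of subsets $\xi\subseteq\mathbb F$ with $1\in\xi$ that are right-convex: whenever a reduced word $a_m^{\varepsilon_m}\cdots a_1^{\varepsilon_1}$ ($a_i\in A$, $\varepsilon_i=\pm1$) lies in $\xi$, so does $a_k^{\varepsilon_k}\cdots a_1^{\varepsilon_1}$ for all $k<m$; topology from $\{0,1\}^{\mathbb F}$. Full convex shift: partial action of $\mathbb F$ on $\mathcal C$ with domains $\mathcal C_\alpha=\{\xi:\alpha^{-1}\in\xi\}$, $\alpha.\xi=\xi\alpha^{-1}$ for $\alpha\in\xi$. A convex subshift is the restriction to a closed invariant $\Omega\subseteq\mathcal C$. An $n$-ball is $B\in\mathcal C$ with all $|\alpha|\le n$, together with radius $n$; $\xi^n=\{\alpha\in\xi:|\alpha|\le n\}$. For an $n$-ball $B$, $\xi\not\equiv B$ means $(\alpha.\xi)^n\ne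 B$ for all $\alpha\in\xi$; $\Omega^{\mathcal F}=\{\xi\in\mathcal C:\xi\not\equiv B\ \forall B\in\mathcal F\}$. $\Omega$ is of finite type if $\Omega=\Omega^{\mathcal F}$ for a finite set $\mathcal F$ of balls; $R$-step if $\mathcal F$ can be taken to be a finite set of $R$-balls. $n$-ball subshift: $A^{[n:\Omega]}$ is the finite set of formal symbols $[(a.\xi)^n\xleftarrow{a}\xi^n]$ with $\xi\in\Omega$, $a\in A$, $a\in\xi$ (determined by the triple $(B,a,B')$), with $[B'\xleftarrow{a^{-1}}B]:=[B\xleftarrow{a}B']^{-1}$ in $\mathbb F^{[n:\Omega]}=\mathbb F(A^{[n:\Omega]})$. For $\xi\in\Omega$, $\alpha=s_m\cdots s_1\in\xi$ reduced, $B_k=((s_k\cdots s_1).\xi)^n$, $\phi_n(\xi,\alpha)=[B_m\xleftarrow{s_m}B_{m-1}]\cdots[B_1\xleftarrow{s_1}B_0]$, $\phi_n(\xi,1)=1$, $\phi_n(\xi)=\{\phi_n(\xi,\alpha):\alpha\in\xi\}$. $\theta^{[n]}$ is the restriction of the full convex shift on $A^{[n:\Omega]}$ to $\Omega^{[n]}:=\phi_n(\Omega)$. Partial actions: $\Omega_g$ is the domain of $\theta_{g^{-1}}$. Given a homomorphism $\Psi\colon G\to H$ and partial actions on $\Omega,\Omega'$, a continuous $\varphi\colon\Omega\to\Omega'$ is $\Psi$-equivariant if $\varphi(\Omega_g)\subseteq\Omega'_{\Psi(g)}$ and $\varphi(g.x)=\Psi(g).\varphi(x)$ for $x\in\Omega_{g^{-1}}$;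 $(\varphi,\Psi)$ is a direct dynamical equivalence if moreover $\varphi$ is a homeomorphism, $\Omega_g\cap\Omega_{g'}=\emptyset$ whenever $g\ne g'$ and $\Psi(g)=\Psi(g')$, and $\Omega'_h=\bigcup_{\Psi(g)=h}\varphi(\Omega_g)$ for all $h$. *)

theory Defs
  imports "HOL-Analysis.Analysis"
begin

text \<open>A letter is a pair (a, e) standing for a^e, with e = True for exponent +1 and
  e = False for exponent -1.  A word a_m^{e_m} ... a_1^{e_1} is the list
  [(a_m,e_m), ..., (a_1,e_1)] (written order: head = leftmost letter, the last list
  element is the letter a_1^{e_1} which is applied first).\<close>

type_synonym 'a letter = "'a \<times> bool"
type_synonym 'a word = "'a letter list"

definition inv_letter :: "'a letter \<Rightarrow> 'a letter" where
  "inv_letter x = (fst x, \<not> snd x)"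

fun reduced :: "'a word \<Rightarrow> bool" where
  "reduced [] = True"
| "reduced [x] = True"
| "reduced (x # y # ws) = (y \<noteq> inv_letter x \<and> reduced (y # ws))"

definition red_cons :: "'a letter \<Rightarrow> 'a word \<Rightarrow> 'a word" where
  "red_cons x ws = (case ws of [] \<Rightarrow> [x]
      | y # ys \<Rightarrow> (if y = inv_letter x then ys else x # ws))"

definition freduce :: "'a word \<Rightarrow> 'a word" where
  "freduce ws = foldr red_cons ws []"

definition fmult :: "'a word \<Rightarrow> 'a word \<Rightarrow> 'a word" where
  "fmult g h = freduce (g @ h)"

definition finv :: "'a word \<Rightarrow> 'a word" where
  "finv g = rev (map inv_letter g)"

definition fg :: "'a set \<Rightarrow> 'a word set" where
  "fg A = {w. reduced w \<and> fst ` set w \<subseteq> A}"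

definition fg_hom :: "'a set \<Rightarrow> 'b set \<Rightarrow> ('a word \<Rightarrow> 'b word) \<Rightarrow> bool" where
  "fg_hom A B \<Psi> \<longleftrightarrow> (\<forall>g\<in>fg A. \<Psi> g \<in> fg B) \<and>
      (\<forall>g\<in>fg A. \<forall>h\<in>fg A. \<Psi> (fmult g h) = fmult (\<Psi> g) (\<Psi> h))"

text \<open>Right-convex subsets of F(A) containing 1: for a reduced word a_m..a_1 in xi,
  all a_k..a_1 (k < m) are in xi, i.e. xi is closed under dropping leftmost letters.\<close>
definition convex :: "'a set \<Rightarrow> 'a word set \<Rightarrow> bool" where
  "convex A \<xi> \<longleftrightarrow> \<xi> \<subseteq> fg A \<and> [] \<in> \<xi> \<and> (\<forall>w\<in>\<xi>. \<forall>k. drop k w \<in> \<xi>)"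

definition CC :: "'a set \<Rightarrow> 'a word set set" where
  "CC A = {\<xi>. convex A \<xi>}"

text \<open>Topology on sets of words inherited from {0,1}^F: the product topology, generated
  by the cylinder sets {xi. w in xi} and {xi. w notin xi}.\<close>
definition cantor_top :: "'a word set topology" where
  "cantor_top = topology_generated_by
      ((\<lambda>w. {\<xi>. w \<in> \<xi>}) ` UNIV \<union> (\<lambda>w. {\<xi>. w \<notin> \<xi>}) ` UNIV)"

text \<open>The full convex shift: alpha.xi = xi alpha^{-1} (used for alpha in xi).\<close>
definition act :: "'a word \<Rightarrow> 'a word set \<Rightarrow> 'a word set" where
  "act \<alpha> \<xi> = (\<lambda>\<beta>. fmult \<beta> (finv \<alpha>)) ` \<xi>"

text \<open>Domain Omega_g of the restricted partial action (= domain of theta_{g^{-1}}),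
  i.e. Omega_g = Omega \<inter> C_g with C_g = {xi. g^{-1} in xi}.\<close>
definition cdom :: "'a word set set \<Rightarrow> 'a word \<Rightarrow> 'a word set set" where
  "cdom \<Omega> g = {\<xi> \<in> \<Omega>. finv g \<in> \<xi>}"

definition convex_subshift :: "'a set \<Rightarrow> 'a word set set \<Rightarrow> bool" where
  "convex_subshift A \<Omega> \<longleftrightarrow> \<Omega> \<subseteq> CC A \<and> closedin cantor_top \<Omega> \<and>
      (\<forall>\<xi>\<in>\<Omega>. \<forall>\<alpha>\<in>\<xi>. act \<alpha> \<xi> \<in> \<Omega>)"

definition ball_of :: "nat \<Rightarrow> 'a word set \<Rightarrow> 'a word set" where
  "ball_of n \<xi> = {\<alpha> \<in> \<xi>. length \<alpha> \<le> n}"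

definition is_ball :: "'a set \<Rightarrow> 'a word set \<times> nat \<Rightarrow> bool" where
  "is_ball A Bn \<longleftrightarrow> fst Bn \<in> CC A \<and> (\<forall>\<alpha>\<in>fst Bn. length \<alpha> \<le> snd Bn)"

definition avoids :: "'a word set \<Rightarrow> 'a word set \<times> nat \<Rightarrow> bool" where
  "avoids \<xi> Bn \<longleftrightarrow> (\<forall>\<alpha>\<in>\<xi>. ball_of (snd Bn) (act \<alpha> \<xi>) \<noteq> fst Bn)"

definition Omega_F :: "'a set \<Rightarrow> ('a word set \<times> nat) set \<Rightarrow> 'a word set set" where
  "Omega_F A \<F> = {\<xi> \<in> CC A. \<forall>Bn\<in>\<F>. avoids \<xi> Bn}"

definition finite_type :: "'a set \<Rightarrow> 'a word set set \<Rightarrow> bool" where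
  "finite_type A \<Omega> \<longleftrightarrow>
     (\<exists>\<F>. finite \<F> \<and> (\<forall>Bn\<in>\<F>. is_ball A Bn) \<and> \<Omega> = Omega_F A \<F>)"

definition R_step :: "nat \<Rightarrow> 'a set \<Rightarrow> 'a word set set \<Rightarrow> bool" where
  "R_step R A \<Omega> \<longleftrightarrow>
     (\<exists>\<F>. finite \<F> \<and> (\<forall>Bn\<in>\<F>. is_ball A Bn \<and> snd Bn = R) \<and> \<Omega> = Omega_F A \<F>)"

text \<open>The symbol [B' <-a- B] is encoded as the triple (B', a, B).\<close>
type_synonym 'a nsym = "'a word set \<times> 'a \<times> 'a word set"

definition nball_alph :: "nat \<Rightarrow> 'a set \<Rightarrow> 'a word set set \<Rightarrow> 'a nsym set" where
  "nball_alph n A \<Omega> = {(ball_of n (act [(a, True)] \<xi>), a, ball_of n \<xi>) | \<xi> a.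
      \<xi> \<in> \<Omega> \<and> a \<in> A \<and> [(a, True)] \<in> \<xi>}"

text \<open>The letter [B_k <-s_k- B_{k-1}] of F^{[n:Omega]}, where B_{k-1} = (alpha.xi)^n,
  B_k = ((s alpha).xi)^n; for s = a^{-1} it is [B_{k-1} <-a- B_k]^{-1}.\<close>
definition phi_letter :: "nat \<Rightarrow> 'a word set \<Rightarrow> 'a letter \<Rightarrow> 'a word \<Rightarrow> 'a nsym letter" where
  "phi_letter n \<xi> s \<alpha> =
     (let B0 = ball_of n (act \<alpha> \<xi>); B1 = ball_of n (act (s # \<alpha>) \<xi>) in
      if snd s then ((B1, fst s, B0), True) else ((B0, fst s, B1), False))"

fun phi_word :: "nat \<Rightarrow> 'a word set \<Rightarrow> 'a word \<Rightarrow> 'a nsym word" where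
  "phi_word n \<xi> [] = []"
| "phi_word n \<xi> (s # \<alpha>) = fmult [phi_letter n \<xi> s \<alpha>] (phi_word n \<xi> \<alpha>)"

definition phi_n :: "nat \<Rightarrow> 'a word set \<Rightarrow> 'a nsym word set" where
  "phi_n n \<xi> = phi_word n \<xi> ` \<xi>"

definition Omega_n :: "nat \<Rightarrow> 'a word set set \<Rightarrow> 'a nsym word set set" where
  "Omega_n n \<Omega> = phi_n n ` \<Omega>"

definition Psi_n :: "'a nsym word \<Rightarrow> 'a word" where
  "Psi_n w = freduce (map (\<lambda>x. (fst (snd (fst x)), snd x)) w)"

definition psi_n :: "'a nsym word set \<Rightarrow> 'a word set" where
  "psi_n \<eta> = Psi_n ` \<eta>"

definition direct_dyn_equiv ::
  "'a set \<Rightarrow> 'a word set set \<Rightarrow> 'b set \<Rightarrow> 'b word set set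
     \<Rightarrow> ('a word set \<Rightarrow> 'b word set) \<Rightarrow> ('a word \<Rightarrow> 'b word) \<Rightarrow> bool" where
  "direct_dyn_equiv A \<Omega> B \<Omega>' \<phi> \<Psi> \<longleftrightarrow>
     fg_hom A B \<Psi> \<and>
     continuous_map (subtopology cantor_top \<Omega>) (subtopology cantor_top \<Omega>') \<phi> \<and>
     (\<forall>g\<in>fg A. \<phi> ` cdom \<Omega> g \<subseteq> cdom \<Omega>' (\<Psi> g)) \<and>
     (\<forall>g\<in>fg A. \<forall>x\<in>cdom \<Omega> (finv g). \<phi> (act g x) = act (\<Psi> g) (\<phi> x)) \<and>
     homeomorphic_map (subtopology cantor_top \<Omega>) (subtopology cantor_top \<Omega>') \<phi> \<and>
     (\<forall>g\<in>fg A. \<forall>g'\<in>fg A. g \<noteq> g' \<and> \<Psi> g = \<Psi> g' \<longrightarrow> cdom \<Omega> g \<inter> cdom \<Omega> g' = {}) \<and>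
     (\<forall>h\<in>fg B. cdom \<Omega>' h = (\<Union>g\<in>{g\<in>fg A. \<Psi> g = h}. \<phi> ` cdom \<Omega> g))"

end

theory Submission
  imports Defs
begin

text \<open>Every symbol of the ball alphabet remembers its underlying letter, so reading off
  the letters inverts the coding: \<open>\<Psi>\<^sub>n (\<phi>\<^sub>n(\<xi>, \<alpha>)) = \<alpha>\<close>.  As \<open>\<phi>\<^sub>n(\<xi>, -)\<close> is a
  cocycle for the shift, \<open>\<psi>\<^sub>n\<close> is an equivariant bijection of \<open>\<Omega>\<^sup>[\<^sup>n\<^sup>]\<close> onto \<open>\<Omega>\<close>
  with inverse \<open>\<phi>\<^sub>n\<close>.  Both maps are continuous because whether a word lies in the
  image depends on finitely many words of the argument, and distinct group elements with
  the same image never lie in one configuration because \<open>\<Psi>\<^sub>n\<close> is injective on it.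

  If \<open>\<Omega>\<close> is defined by finitely many forbidden balls of radius at most \<open>N\<close>, then
  \<open>\<Omega>\<^sup>[\<^sup>N\<^sup>]\<close> is defined by forbidding the 1-balls that do not occur in it.  In a
  configuration \<open>\<eta>\<close> all of whose 1-balls occur in \<open>\<Omega>\<^sup>[\<^sup>N\<^sup>]\<close>, every letter is an edge
  between two \<open>N\<close>-balls; an induction along words shows that these recorded balls are
  the actual \<open>N\<close>-balls of the decoded configuration \<open>\<Psi>\<^sub>N(\<eta>)\<close>.  Hence \<open>\<Psi>\<^sub>N(\<eta>)\<close>
  avoids the forbidden balls, lies in \<open>\<Omega>\<close>, and is coded back to \<open>\<eta>\<close>.\<close>

section \<open>Reduced words\<close>

lemma inv_letter_inv_letter[simp]: "inv_letter (inv_letter x) = x"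
  by (simp add: inv_letter_def)

lemma fst_inv_letter[simp]: "fst (inv_letter x) = fst x"
  and snd_inv_letter[simp]: "snd (inv_letter x) = (\<not> snd x)"
  by (auto simp: inv_letter_def)

lemma inv_letter_eq_iff: "inv_letter x = y \<longleftrightarrow> x = inv_letter y"
  by auto

lemma reduced_Cons: "reduced (x # w) \<longleftrightarrow> reduced w \<and> (w = [] \<or> hd w \<noteq> inv_letter x)"
  by (cases w) auto

lemma reduced_append:
  "reduced (u @ v) \<longleftrightarrow>
    reduced u \<and> reduced v \<and> (u = [] \<or> v = [] \<or> hd v \<noteq> inv_letter (last u))"
  by (induction u rule: reduced.induct) (auto simp: reduced_Cons)

lemma reduced_drop: "reduced w \<Longrightarrow> reduced (drop k w)"
  by (metis append_take_drop_id reduced_append)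

lemma reduced_red_cons: "reduced w \<Longrightarrow> reduced (red_cons x w)"
  by (cases w) (auto simp: red_cons_def reduced_Cons)

lemma red_cons_inv_cancel: "reduced w \<Longrightarrow> red_cons x (red_cons (inv_letter x) w) = w"
proof (cases w)
  case (Cons y ys)
  assume r: "reduced w"
  show ?thesis
  proof (cases "y = x")
    case True
    then show ?thesis using r Cons by (cases ys) (auto simp: red_cons_def)
  next
    case False
    then show ?thesis using Cons by (auto simp: red_cons_def)
  qed
qed (simp add: red_cons_def)

lemma reduced_foldr_red_cons: "reduced w \<Longrightarrow> reduced (foldr red_cons u w)"
  by (induction u) (auto simp: reduced_red_cons)

lemma reduced_freduce[simp]: "reduced (freduce w)"
  by (simp add: freduce_def reduced_foldr_red_cons)

lemma freduce_Nil[simp]: "freduce [] = []" by (simp add: freduce_def)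

lemma freduce_Cons: "freduce (x # w) = red_cons x (freduce w)"
  by (simp add: freduce_def)

lemma freduce_ident: "reduced w \<Longrightarrow> freduce w = w"
  by (induction w) (auto simp: freduce_Cons reduced_Cons red_cons_def split: list.split)

lemma foldr_red_cons_red_cons:
  assumes "reduced r" "reduced w"
  shows "foldr red_cons (red_cons x r) w = red_cons x (foldr red_cons r w)"
proof (cases r)
  case Nil then show ?thesis by (simp add: red_cons_def)
next
  case (Cons y ys)
  show ?thesis
  proof (cases "y = inv_letter x")
    case True
    have "red_cons x (foldr red_cons r w) =
        red_cons x (red_cons (inv_letter x) (foldr red_cons ys w))"
      using Cons True by simp
    also have "\<dots> = foldr red_cons ys w"
      by (rule red_cons_inv_cancel)
        (use assms Cons in \<open>auto intro: reduced_foldr_red_cons simp: reduced_Cons\<close>)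
    finally show ?thesis using Cons True by (simp add: red_cons_def)
  next
    case False then show ?thesis using Cons by (simp add: red_cons_def)
  qed
qed

lemma foldr_red_cons_freduce: "reduced w \<Longrightarrow> foldr red_cons (freduce u) w = foldr red_cons u w"
  by (induction u) (simp_all add: freduce_Cons foldr_red_cons_red_cons)

lemma freduce_append: "freduce (u @ v) = foldr red_cons u (freduce v)"
  by (simp add: freduce_def)

lemma freduce_append_freduce_left[simp]: "freduce (freduce u @ v) = freduce (u @ v)"
  by (simp add: freduce_append foldr_red_cons_freduce)

lemma freduce_append_freduce_right[simp]: "freduce (u @ freduce v) = freduce (u @ v)"
  by (simp add: freduce_append freduce_ident)

lemma freduce_freduce[simp]: "freduce (freduce u) = freduce u"
  by (simp add: freduce_ident)

lemma fmult_assoc: "fmult (fmult a b) c = fmult a (fmult b c)"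
  unfolding fmult_def
  by (metis append_assoc freduce_append_freduce_left freduce_append_freduce_right)

lemma reduced_fmult[simp]: "reduced (fmult a b)"
  by (simp add: fmult_def)

lemma fmult_Nil_left: "reduced b \<Longrightarrow> fmult [] b = b"
  by (simp add: fmult_def freduce_ident)

lemma fmult_Nil_right: "reduced b \<Longrightarrow> fmult b [] = b"
  by (simp add: fmult_def freduce_ident)

lemma finv_Nil[simp]: "finv [] = []" by (simp add: finv_def)

lemma finv_Cons: "finv (x # w) = finv w @ [inv_letter x]" by (simp add: finv_def)

lemma finv_append: "finv (u @ v) = finv v @ finv u" by (simp add: finv_def)

lemma finv_finv[simp]: "finv (finv w) = w" by (simp add: finv_def rev_map comp_def)

lemma length_finv[simp]: "length (finv w) = length w" by (simp add: finv_def)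

lemma finv_eq_Nil_iff[simp]: "finv w = [] \<longleftrightarrow> w = []" by (simp add: finv_def)

lemma freduce_finv_append_cancel: "freduce (finv w @ w) = []"
proof (induction w)
  case (Cons x w)
  have "freduce (finv (x # w) @ x # w) = foldr red_cons (finv w) (freduce (inv_letter x # x # w))"
    by (simp add: finv_Cons freduce_append)
  also have "freduce (inv_letter x # x # w) = freduce w"
    using red_cons_inv_cancel[of "freduce w" "inv_letter x"] by (simp add: freduce_Cons)
  finally show ?case using Cons by (simp add: freduce_append)
qed simp

lemma freduce_append_finv_cancel: "freduce (w @ finv w) = []"
  using freduce_finv_append_cancel[of "finv w"] by simp

lemma fmult_finv_right[simp]: "fmult w (finv w) = []"
  by (simp add: fmult_def freduce_append_finv_cancel)

lemma fmult_finv_left[simp]: "fmult (finv w) w = []"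
  by (simp add: fmult_def freduce_finv_append_cancel)

lemma last_finv: "w \<noteq> [] \<Longrightarrow> last (finv w) = inv_letter (hd w)"
  by (cases w) (auto simp: finv_Cons)

lemma reduced_finv: "reduced w \<Longrightarrow> reduced (finv w)"
proof (induction w)
  case (Cons x w)
  then have "reduced w" "w = [] \<or> hd w \<noteq> inv_letter x" by (auto simp: reduced_Cons)
  with Cons.IH show ?case
    by (auto simp: finv_Cons reduced_append last_finv)
qed simp

lemma fmult_left_inv_unique:
  assumes "reduced x" "reduced y" "fmult x y = []"
  shows "x = finv y"
proof -
  have "x = fmult x (fmult y (finv y))" using assms by (simp add: fmult_Nil_right)
  also have "\<dots> = fmult (fmult x y) (finv y)" by (simp add: fmult_assoc)
  also have "\<dots> = finv y" using assms by (simp add: fmult_Nil_left reduced_finv)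
  finally show ?thesis .
qed

lemma fmult_right_inv_unique:
  assumes "reduced x" "reduced y" "fmult x y = []"
  shows "y = finv x"
proof -
  have "y = fmult [] y" using assms by (simp add: fmult_Nil_left)
  also have "\<dots> = fmult (fmult (finv x) x) y" by simp
  also have "\<dots> = fmult (finv x) (fmult x y)" by (rule fmult_assoc)
  also have "\<dots> = finv x" using assms by (simp add: fmult_Nil_right reduced_finv)
  finally show ?thesis .
qed

lemma freduce_finv: "freduce (finv w) = finv (freduce w)"
proof -
  have h: "fmult (freduce w) (freduce (finv w)) = []"
    by (simp add: fmult_def freduce_append_finv_cancel)
  show ?thesis by (rule fmult_right_inv_unique[OF _ _ h]) simp_all
qed

lemma fmult_finv_freduce: "fmult b (finv (freduce w)) = fmult b (finv w)"
  by (metis fmult_def freduce_finv freduce_append_freduce_right)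

lemma fmult_single: "reduced p \<Longrightarrow> fmult [x] p = red_cons x p"
  by (simp add: fmult_def freduce_Cons freduce_ident)

lemma fmult_single_Cons: "reduced (s # p) \<Longrightarrow> fmult [s] p = s # p"
  by (cases p) (auto simp: fmult_single reduced_Cons red_cons_def)

lemma set_red_cons: "set (red_cons x w) \<subseteq> insert x (set w)"
  by (auto simp: red_cons_def split: list.split)

lemma set_freduce: "set (freduce w) \<subseteq> set w"
  by (induction w) (auto simp: freduce_Cons dest: set_red_cons[THEN subsetD])

lemma length_red_cons: "length (red_cons x w) \<le> Suc (length w)"
  by (auto simp: red_cons_def split: list.split)

lemma length_freduce: "length (freduce w) \<le> length w"
  by (induction w) (auto simp: freduce_Cons intro: le_trans[OF length_red_cons])

lemma freduce_map:
  assumes m: "\<And>x. m (inv_letter x) = inv_letter (m x)"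
  shows "freduce (map m (freduce w)) = freduce (map m w)"
proof (induction w)
  case (Cons x w)
  let ?r = "freduce w"
  show ?case
  proof (cases "\<exists>ys. ?r = inv_letter x # ys")
    case True
    then obtain ys where ys: "?r = inv_letter x # ys" by blast
    have "freduce (map m (x # w)) = red_cons (m x) (freduce (map m ?r))"
      using Cons by (simp add: freduce_Cons)
    also have "\<dots> = red_cons (m x) (red_cons (inv_letter (m x)) (freduce (map m ys)))"
      using ys by (simp add: freduce_Cons m)
    also have "\<dots> = freduce (map m ys)" by (simp add: red_cons_inv_cancel)
    finally show ?thesis using ys by (simp add: freduce_Cons red_cons_def)
  next
    case False
    then have "red_cons x ?r = x # ?r" by (auto simp: red_cons_def split: list.split)
    then show ?thesis using Cons by (simp add: freduce_Cons)
  qed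
qed simp

lemma fg_fmult: "a \<in> fg A \<Longrightarrow> b \<in> fg A \<Longrightarrow> fmult a b \<in> fg A"
  unfolding fg_def fmult_def using set_freduce[of "a @ b"] by (auto 0 3)

lemma fg_finv: "a \<in> fg A \<Longrightarrow> finv a \<in> fg A"
  using reduced_finv[of a] unfolding fg_def by (auto simp: finv_def)

lemma fg_drop: "a \<in> fg A \<Longrightarrow> drop k a \<in> fg A"
  unfolding fg_def using reduced_drop set_drop_subset by fastforce

lemma finite_words_length_le: "finite B \<Longrightarrow> finite {w :: 'b word. set w \<subseteq> B \<times> UNIV \<and> length w \<le> k}"
  using finite_lists_length_le[of "B \<times> (UNIV :: bool set)" k] by simp

lemma finite_fg_length_le: "finite B \<Longrightarrow> finite {w \<in> fg B. length w \<le> k}"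
  by (rule finite_subset[OF _ finite_words_length_le[of B k]]) (auto simp: fg_def)

lemma fmult_snoc: "reduced (\<delta>' @ [t]) \<Longrightarrow> fmult \<delta>' [t] = \<delta>' @ [t]"
  by (simp add: fmult_def freduce_ident)

lemma fmult_last_letter_mem:
  assumes cv: "\<forall>w\<in>\<xi>. \<forall>k. drop k w \<in> \<xi>" and a: "\<alpha> \<in> \<xi>" "reduced \<alpha>"
    and d: "reduced (\<delta>' @ [t])" and m: "fmult (\<delta>' @ [t]) \<alpha> \<in> \<xi>"
  shows "fmult [t] \<alpha> \<in> \<xi>"
proof (cases "\<exists>\<alpha>'. \<alpha> = inv_letter t # \<alpha>'")
  case True
  then obtain \<alpha>' where "\<alpha> = inv_letter t # \<alpha>'" by blast
  moreover then have "fmult [t] \<alpha> = \<alpha>'" using a by (simp add: fmult_single red_cons_def)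
  ultimately show ?thesis using cv a by (metis drop_Suc drop_0 list.sel(3))
next
  case False
  then have h: "\<alpha> = [] \<or> hd \<alpha> \<noteq> inv_letter t" by (cases \<alpha>) auto
  have r: "reduced ((\<delta>' @ [t]) @ \<alpha>)" by (rule iffD2[OF reduced_append]) (use d a h in auto)
  then have "fmult (\<delta>' @ [t]) \<alpha> = \<delta>' @ t # \<alpha>" by (simp add: fmult_def freduce_ident)
  moreover have "reduced (t # \<alpha>)" using h a(2) by (simp only: reduced_Cons)
  then have "fmult [t] \<alpha> = t # \<alpha>" by (rule fmult_single_Cons)
  moreover have "drop (length \<delta>') (\<delta>' @ t # \<alpha>) = t # \<alpha>" by simp
  ultimately show ?thesis using cv m by metis
qed

lemma drop_length_le_1: "length w \<le> 1 \<Longrightarrow> drop k w = w \<or> drop k w = []"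
  by (cases w; cases k) auto

section \<open>Forgetting the balls\<close>

definition base_letter :: "'a nsym letter \<Rightarrow> 'a letter" where
  "base_letter x = (fst (snd (fst x)), snd x)"

lemma base_letter_inv_letter[simp]: "base_letter (inv_letter x) = inv_letter (base_letter x)"
  by (simp add: base_letter_def inv_letter_def)

lemma Psi_n_eq_freduce_base: "Psi_n w = freduce (map base_letter w)"
  by (simp add: Psi_n_def base_letter_def[abs_def])

lemma Psi_n_fmult: "Psi_n (fmult g h) = fmult (Psi_n g) (Psi_n h)"
proof -
  have "Psi_n (fmult g h) = freduce (map base_letter (g @ h))"
    by (simp add: Psi_n_eq_freduce_base fmult_def freduce_map)
  also have "\<dots> = fmult (Psi_n g) (Psi_n h)"
    by (simp add: Psi_n_eq_freduce_base fmult_def)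
  finally show ?thesis .
qed

lemma reduced_Psi_n[simp]: "reduced (Psi_n g)"
  by (simp add: Psi_n_eq_freduce_base)

lemma Psi_n_Nil[simp]: "Psi_n [] = []" by (simp add: Psi_n_eq_freduce_base)

lemma Psi_n_finv: "Psi_n (finv g) = finv (Psi_n g)"
proof -
  have "fmult (Psi_n (finv g)) (Psi_n g) = []"
    by (metis Psi_n_fmult Psi_n_Nil fmult_finv_left)
  then show ?thesis by (rule fmult_left_inv_unique[rotated 2]) simp_all
qed

lemma Psi_n_single[simp]: "Psi_n [x] = [base_letter x]"
  by (simp add: Psi_n_eq_freduce_base freduce_Cons red_cons_def)

lemma Psi_n_eq_map_base: "reduced (map base_letter w) \<Longrightarrow> Psi_n w = map base_letter w"
  by (simp add: Psi_n_eq_freduce_base freduce_ident)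

section \<open>The shift action\<close>

lemma act_act: "act \<delta> (act \<alpha> \<xi>) = act (\<delta> @ \<alpha>) \<xi>"
proof -
  have "fmult (fmult \<beta> (finv \<alpha>)) (finv \<delta>) = fmult \<beta> (finv (\<delta> @ \<alpha>))" for \<beta>
    by (simp add: fmult_def finv_append)
  then show ?thesis by (auto simp: act_def image_image)
qed

lemma act_freduce: "act (freduce w) \<xi> = act w \<xi>"
  by (simp add: act_def fmult_finv_freduce)

lemma act_Cons_freduce: "act (s # freduce w) \<xi> = act (s # w) \<xi>"
  by (metis act_freduce freduce_Cons freduce_freduce)

lemma act_inv_letter_cancel: "act (inv_letter s # s # w) \<xi> = act w \<xi>"
proof -
  have "freduce (inv_letter s # s # w) = freduce w"
    using red_cons_inv_cancel[of "freduce w" "inv_letter s"] by (simp add: freduce_Cons)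
  then show ?thesis by (metis act_freduce)
qed

definition all_reduced :: "'b word set \<Rightarrow> bool" where
  "all_reduced \<xi> \<longleftrightarrow> (\<forall>w\<in>\<xi>. reduced w)"

lemma act_Nil: "all_reduced \<xi> \<Longrightarrow> act [] \<xi> = \<xi>"
  by (auto simp: act_def all_reduced_def fmult_Nil_right)

lemma mem_act_iff:
  assumes "all_reduced \<xi>" "reduced \<delta>"
  shows "\<delta> \<in> act \<alpha> \<xi> \<longleftrightarrow> fmult \<delta> \<alpha> \<in> \<xi>"
proof
  assume "\<delta> \<in> act \<alpha> \<xi>"
  then obtain \<beta> where b: "\<beta> \<in> \<xi>" "\<delta> = fmult \<beta> (finv \<alpha>)" by (auto simp: act_def)
  then have "fmult \<delta> \<alpha> = fmult \<beta> (fmult (finv \<alpha>) \<alpha>)" by (simp add: fmult_assoc)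
  also have "\<dots> = \<beta>" using assms b by (simp add: all_reduced_def fmult_Nil_right)
  finally show "fmult \<delta> \<alpha> \<in> \<xi>" using b by simp
next
  assume "fmult \<delta> \<alpha> \<in> \<xi>"
  moreover have "fmult (fmult \<delta> \<alpha>) (finv \<alpha>) = \<delta>"
    using assms by (simp add: fmult_assoc fmult_Nil_right)
  ultimately show "\<delta> \<in> act \<alpha> \<xi>" unfolding act_def by (metis image_eqI)
qed

lemma act_subset_fg: "\<xi> \<subseteq> fg A \<Longrightarrow> \<alpha> \<in> fg A \<Longrightarrow> act \<alpha> \<xi> \<subseteq> fg A"
  by (auto simp: act_def intro!: fg_fmult fg_finv)

lemma ball_of_act:
  assumes "\<xi> \<subseteq> fg A" "\<alpha> \<in> fg A"
  shows "ball_of R (act \<alpha> \<xi>) = {\<delta> \<in> fg A. length \<delta> \<le> R \<and> fmult \<delta> \<alpha> \<in> \<xi>}"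
proof -
  have ar: "all_reduced \<xi>" using assms by (auto simp: all_reduced_def fg_def)
  show ?thesis
    using act_subset_fg[OF assms] mem_act_iff[OF ar] by (auto simp: ball_of_def fg_def)
qed

lemma ball_of_ball_of: "R \<le> N \<Longrightarrow> ball_of R (ball_of N S) = ball_of R S"
  by (auto simp: ball_of_def)

section \<open>The coding map\<close>

lemma phi_letter_freduce: "phi_letter n \<xi> s (freduce w) = phi_letter n \<xi> s w"
  by (simp add: phi_letter_def act_freduce act_Cons_freduce)

lemma phi_letter_inv_letter:
  "phi_letter n \<xi> (inv_letter s) (s # w) = inv_letter (phi_letter n \<xi> s w)"
proof -
  obtain a e where s: "s = (a, e)" by (cases s)
  have "act ((a, \<not> e) # (a, e) # w) \<xi> = act w \<xi>"
    using act_inv_letter_cancel[of "(a,e)"] by (simp add: inv_letter_def)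
  then show ?thesis using s by (cases e) (simp_all add: phi_letter_def Let_def inv_letter_def)
qed

lemma base_phi_letter[simp]: "base_letter (phi_letter n \<xi> s w) = s"
  by (cases s) (simp add: phi_letter_def Let_def base_letter_def)

lemma reduced_phi_word[simp]: "reduced (phi_word n \<xi> w)"
  by (cases w) simp_all

lemma phi_word_freduce: "phi_word n \<xi> (freduce w) = phi_word n \<xi> w"
proof (induction w)
  case (Cons s w)
  let ?r = "freduce w"
  show ?case
  proof (cases "\<exists>ys. ?r = inv_letter s # ys")
    case True
    then obtain ys where ys: "?r = inv_letter s # ys" by blast
    let ?z = "phi_letter n \<xi> (inv_letter s) ys"
    have "phi_word n \<xi> (s # w) = fmult [phi_letter n \<xi> s ?r] (phi_word n \<xi> ?r)"
      using Cons by (simp add: phi_letter_freduce)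
    also have "phi_letter n \<xi> s ?r = inv_letter ?z"
      using ys phi_letter_inv_letter[of n \<xi> "inv_letter s" ys] by simp
    also have "phi_word n \<xi> ?r = fmult [?z] (phi_word n \<xi> ys)" using ys by simp
    also have "fmult [inv_letter ?z] (fmult [?z] (phi_word n \<xi> ys)) = phi_word n \<xi> ys"
      using red_cons_inv_cancel[of "phi_word n \<xi> ys" "inv_letter ?z"]
        by (simp add: fmult_single reduced_red_cons)
    finally show ?thesis using ys by (simp add: freduce_Cons red_cons_def)
  next
    case False
    then have "red_cons s ?r = s # ?r" by (cases ?r) (simp_all add: red_cons_def)
    then show ?thesis using Cons by (simp add: freduce_Cons phi_letter_freduce)
  qed
qed simp

lemma phi_letter_append: "phi_letter n \<xi> s (u @ w) = phi_letter n (act w \<xi>) s u"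
  by (simp add: phi_letter_def act_act)

lemma phi_word_append: "phi_word n \<xi> (u @ w) = fmult (phi_word n (act w \<xi>) u) (phi_word n \<xi> w)"
proof (induction u)
  case Nil then show ?case by (simp add: fmult_Nil_left)
next
  case (Cons s u)
  then show ?case by (simp add: phi_letter_append fmult_assoc)
qed

lemma Psi_n_phi_word: "Psi_n (phi_word n \<xi> w) = freduce w"
proof (induction w)
  case (Cons s w)
  have "Psi_n (phi_word n \<xi> (s#w)) = fmult [s] (freduce w)"
    by (simp only: phi_word.simps Psi_n_fmult Cons.IH Psi_n_single base_phi_letter)
  also have "\<dots> = freduce (s # w)"
    by (metis append_Cons append_Nil fmult_def freduce_append_freduce_right)
  finally show ?case .
qed simp

lemma length_phi_word_le: "length (phi_word n \<xi> w) \<le> length w"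
proof (induction w)
  case (Cons s w)
  then show ?case using length_red_cons[of "phi_letter n \<xi> s w" "phi_word n \<xi> w"]
    by (simp add: fmult_single)
qed simp

lemma length_Psi_n_le: "length (Psi_n w) \<le> length w"
  using length_freduce[of "map base_letter w"] by (simp add: Psi_n_eq_freduce_base)

lemma length_phi_word: "reduced w \<Longrightarrow> length (phi_word n \<xi> w) = length w"
  using length_phi_word_le[of n \<xi> w] length_Psi_n_le[of "phi_word n \<xi> w"]
  by (simp add: Psi_n_phi_word freduce_ident)

lemma phi_word_Cons:
  assumes "reduced (s # w)"
  shows "phi_word n \<xi> (s # w) = phi_letter n \<xi> s w # phi_word n \<xi> w"
proof -
  have w: "reduced w" using assms by (simp add: reduced_Cons)
  let ?x = "phi_letter n \<xi> s w" and ?p = "phi_word n \<xi> w"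
  have "phi_word n \<xi> (s # w) = red_cons ?x ?p" by (simp add: fmult_single)
  moreover have "length (phi_word n \<xi> (s # w)) = Suc (length ?p)"
    using length_phi_word[OF assms] length_phi_word[OF w] by simp
  ultimately show ?thesis by (auto simp: red_cons_def split: list.splits if_splits)
qed

lemma map_base_phi_word: "reduced w \<Longrightarrow> map base_letter (phi_word n \<xi> w) = w"
  by (induction w) (simp_all add: phi_word_Cons reduced_Cons del: phi_word.simps(2))

lemma drop_phi_word: "reduced w \<Longrightarrow> drop k (phi_word n \<xi> w) = phi_word n \<xi> (drop k w)"
proof (induction w arbitrary: k)
  case (Cons s w)
  then show ?case by (cases k) (simp_all add: phi_word_Cons reduced_Cons del: phi_word.simps(2))
qed simp

lemma phi_word_Nil[simp]: "phi_word n \<xi> [] = []" by simp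

lemma phi_word_finv:
  assumes "all_reduced \<xi>"
  shows "phi_word n (act \<alpha> \<xi>) (finv \<alpha>) = finv (phi_word n \<xi> \<alpha>)"
proof -
  have "phi_word n \<xi> (finv \<alpha> @ \<alpha>) = []"
    by (metis freduce_finv_append_cancel phi_word_freduce phi_word_Nil)
  then have "fmult (phi_word n (act \<alpha> \<xi>) (finv \<alpha>)) (phi_word n \<xi> \<alpha>) = []"
    by (simp add: phi_word_append)
  then show ?thesis by (rule fmult_left_inv_unique[rotated 2]) simp_all
qed

lemma phi_word_cocycle:
  assumes "all_reduced \<xi>"
  shows "fmult (phi_word n \<xi> \<gamma>) (finv (phi_word n \<xi> \<alpha>)) = phi_word n (act \<alpha> \<xi>) (fmult \<gamma> (finv \<alpha>))"
proof -
  have "phi_word n (act \<alpha> \<xi>) (fmult \<gamma> (finv \<alpha>)) = phi_word n (act \<alpha> \<xi>) (\<gamma> @ finv \<alpha>)"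
    by (simp add: fmult_def phi_word_freduce)
  also have "\<dots> = fmult (phi_word n (act (finv \<alpha>) (act \<alpha> \<xi>)) \<gamma>) (phi_word n (act \<alpha> \<xi>) (finv \<alpha>))"
    by (rule phi_word_append)
  also have "act (finv \<alpha>) (act \<alpha> \<xi>) = \<xi>"
    using assms by (metis act_act act_freduce act_Nil freduce_finv_append_cancel)
  finally show ?thesis using assms by (simp add: phi_word_finv)
qed

lemma act_phi_word_phi_n:
  assumes "all_reduced \<xi>"
  shows "act (phi_word n \<xi> \<alpha>) (phi_n n \<xi>) = phi_n n (act \<alpha> \<xi>)"
proof -
  have "act (phi_word n \<xi> \<alpha>) (phi_n n \<xi>) = (\<lambda>\<gamma>. phi_word n (act \<alpha> \<xi>) (fmult \<gamma> (finv \<alpha>))) ` \<xi>"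
    unfolding act_def[of "phi_word n \<xi> \<alpha>"] phi_n_def image_image
      using phi_word_cocycle[OF assms] by simp
  also have "\<dots> = phi_n n (act \<alpha> \<xi>)"
    unfolding phi_n_def by (simp add: image_image act_def[of \<alpha> \<xi>])
  finally show ?thesis .
qed

lemma psi_n_phi_n_all_reduced: "all_reduced \<xi> \<Longrightarrow> psi_n (phi_n n \<xi>) = \<xi>"
  by (auto simp: psi_n_def phi_n_def image_image Psi_n_phi_word all_reduced_def freduce_ident)

lemma psi_n_act: "psi_n (act \<beta> \<eta>) = act (Psi_n \<beta>) (psi_n \<eta>)"
  by (simp add: psi_n_def act_def image_image Psi_n_fmult Psi_n_finv)

text \<open>A letter \<open>[B' \<leftarrow>a- B]\<close> is an edge from \<open>B\<close> to \<open>B'\<close>; its inverse runs from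
  \<open>B'\<close> to \<open>B\<close>.\<close>

definition sym_source :: "'a nsym letter \<Rightarrow> 'a word set" where
  "sym_source x = (if snd x then snd (snd (fst x)) else fst (fst x))"

definition sym_target :: "'a nsym letter \<Rightarrow> 'a word set" where
  "sym_target x = (if snd x then fst (fst x) else snd (snd (fst x)))"

lemma sym_source_inv_letter[simp]: "sym_source (inv_letter x) = sym_target x"
  by (simp add: sym_source_def sym_target_def inv_letter_def)

lemma sym_source_phi_letter_Nil: "all_reduced \<zeta> \<Longrightarrow> sym_source (phi_letter n \<zeta> s []) = ball_of n \<zeta>"
  by (simp add: sym_source_def phi_letter_def Let_def act_Nil)

lemma sym_target_phi_letter_Nil: "sym_target (phi_letter n \<zeta> s []) = ball_of n (act [s] \<zeta>)"
  by (simp add: sym_target_def phi_letter_def Let_def)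

lemma phi_word_single: "phi_word n \<zeta> [s] = [phi_letter n \<zeta> s []]"
  by (simp add: fmult_def freduce_Cons red_cons_def)

lemma singleton_in_phi_n_iff:
  assumes "all_reduced \<zeta>"
  shows "[x] \<in> phi_n n \<zeta> \<longleftrightarrow> (\<exists>s. [s] \<in> \<zeta> \<and> x = phi_letter n \<zeta> s [])"
proof
  assume "[x] \<in> phi_n n \<zeta>"
  then obtain \<alpha> where a: "\<alpha> \<in> \<zeta>" "[x] = phi_word n \<zeta> \<alpha>" by (auto simp: phi_n_def)
  have l: "length (phi_word n \<zeta> \<alpha>) = length \<alpha>"
    using length_phi_word[of \<alpha> n \<zeta>] a assms by (simp add: all_reduced_def)
  have "length \<alpha> = 1" using l a(2) by (metis One_nat_def length_Cons list.size(3))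
  then obtain s where "\<alpha> = [s]" by (cases \<alpha>) auto
  then show "\<exists>s. [s] \<in> \<zeta> \<and> x = phi_letter n \<zeta> s []" using a by (metis list.inject phi_word_single)
next
  assume "\<exists>s. [s] \<in> \<zeta> \<and> x = phi_letter n \<zeta> s []"
  then obtain s where "[s] \<in> \<zeta>" "x = phi_letter n \<zeta> s []" by blast
  then show "[x] \<in> phi_n n \<zeta>" unfolding phi_n_def by (metis image_eqI phi_word_single)
qed

section \<open>The product topology on sets of words\<close>

lemma topspace_cantor_top[simp]: "topspace cantor_top = UNIV"
  unfolding cantor_top_def topology_generated_by_topspace by auto

lemma openin_cylinder_mem: "openin cantor_top {\<xi>. w \<in> \<xi>}"
  unfolding cantor_top_def by (rule topology_generated_by_Basis) auto

lemma openin_cylinder_not_mem: "openin cantor_top {\<xi>. w \<notin> \<xi>}"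
  unfolding cantor_top_def by (rule topology_generated_by_Basis) auto

lemma openin_cylinder_eq:
  assumes "finite W"
  shows "openin cantor_top {\<xi>. \<xi> \<inter> W = \<xi>0 \<inter> W}"
  using assms
proof (induction W)
  case empty
  then show ?case using openin_topspace[of cantor_top] by simp
next
  case (insert w W)
  have "{\<xi>. \<xi> \<inter> insert w W = \<xi>0 \<inter> insert w W} =
    {\<xi>. \<xi> \<inter> W = \<xi>0 \<inter> W} \<inter> (if w \<in> \<xi>0 then {\<xi>. w \<in> \<xi>} else {\<xi>. w \<notin> \<xi>})"
    by auto
  then show ?case
    using insert openin_cylinder_mem openin_cylinder_not_mem by (auto intro!: openin_Int)
qed

lemma openin_subtopology_cylinderI:
  assumes "S \<subseteq> X" "\<And>\<xi>. \<xi> \<in> S \<Longrightarrow> \<exists>W. finite W \<and> (\<forall>\<xi>'\<in>X. \<xi>' \<inter> W = \<xi> \<inter> W \<longrightarrow> \<xi>' \<in> S)"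
  shows "openin (subtopology cantor_top X) S"
proof (subst openin_subopen, intro ballI)
  fix \<xi> assume \<xi>: "\<xi> \<in> S"
  then obtain W where W: "finite W" "\<forall>\<xi>'\<in>X. \<xi>' \<inter> W = \<xi> \<inter> W \<longrightarrow> \<xi>' \<in> S" using assms(2) by blast
  define T where "T = {\<xi>'. \<xi>' \<inter> W = \<xi> \<inter> W} \<inter> X"
  have "openin (subtopology cantor_top X) T"
    unfolding openin_subtopology T_def
      using openin_cylinder_eq[OF W(1), of \<xi>] by (intro exI conjI) (assumption, rule refl)
  moreover have "\<xi> \<in> T" using \<xi> assms(1) unfolding T_def by auto
  moreover have "T \<subseteq> S" using W(2) unfolding T_def by auto
  ultimately show "\<exists>T. openin (subtopology cantor_top X) T \<and> \<xi> \<in> T \<and> T \<subseteq> S" by blast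
qed

lemma continuous_map_cylinderI:
  fixes f :: "'a word set \<Rightarrow> 'b word set"
  assumes "f ` X \<subseteq> Y"
    and "\<And>w. openin (subtopology cantor_top X) {\<xi>\<in>X. w \<in> f \<xi>}"
    and "\<And>w. openin (subtopology cantor_top X) {\<xi>\<in>X. w \<notin> f \<xi>}"
  shows "continuous_map (subtopology cantor_top X) (subtopology cantor_top Y) f"
proof -
  define S0 :: "'b word set set set" where "S0 = range (\<lambda>w. {\<xi>. w \<in> \<xi>}) \<union> range (\<lambda>w. {\<xi>. w \<notin> \<xi>})"
  have ct: "cantor_top = topology_generated_by S0" by (simp add: cantor_top_def S0_def)
  have "continuous_map (subtopology cantor_top X) (topology_generated_by S0) f"
  proof (rule continuous_on_generated_topo)
    fix U assume "U \<in> S0"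
    then obtain w where "U = {\<xi>. w \<in> \<xi>} \<or> U = {\<xi>. w \<notin> \<xi>}" unfolding S0_def by blast
    then show "openin (subtopology cantor_top X) (f -` U \<inter> topspace (subtopology cantor_top X))"
    proof
      assume "U = {\<xi>. w \<in> \<xi>}"
      then have "f -` U \<inter> topspace (subtopology cantor_top X) = {\<xi>\<in>X. w \<in> f \<xi>}" by auto
      then show ?thesis using assms(2) by simp
    next
      assume "U = {\<xi>. w \<notin> \<xi>}"
      then have "f -` U \<inter> topspace (subtopology cantor_top X) = {\<xi>\<in>X. w \<notin> f \<xi>}" by auto
      then show ?thesis using assms(3) by simp
    qed
  next
    show "f ` topspace (subtopology cantor_top X) \<subseteq> \<Union>S0" unfolding S0_def by auto
  qed
  then have "continuous_map (subtopology cantor_top X) cantor_top f" by (simp add: ct)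
  then show ?thesis using assms(1) by (auto simp: continuous_map_in_subtopology)
qed

lemma continuous_map_cantor_topI:
  fixes f :: "'a word set \<Rightarrow> 'b word set"
  assumes "f ` X \<subseteq> Y"
    and "\<And>w \<xi>. \<xi> \<in> X \<Longrightarrow>
      \<exists>W. finite W \<and> (\<forall>\<xi>'\<in>X. \<xi>' \<inter> W = \<xi> \<inter> W \<longrightarrow> (w \<in> f \<xi>' \<longleftrightarrow> w \<in> f \<xi>))"
  shows "continuous_map (subtopology cantor_top X) (subtopology cantor_top Y) f"
proof (rule continuous_map_cylinderI[OF assms(1)])
  fix w
  show "openin (subtopology cantor_top X) {\<xi>\<in>X. w \<in> f \<xi>}"
  proof (rule openin_subtopology_cylinderI)
    fix \<xi> assume \<xi>: "\<xi> \<in> {\<xi>\<in>X. w \<in> f \<xi>}"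
    then obtain W where "finite W" "\<forall>\<xi>'\<in>X. \<xi>' \<inter> W = \<xi> \<inter> W \<longrightarrow> (w \<in> f \<xi>' \<longleftrightarrow> w \<in> f \<xi>)"
      using assms(2)[of \<xi> w] by auto
    with \<xi> show "\<exists>W. finite W \<and> (\<forall>\<xi>'\<in>X. \<xi>' \<inter> W = \<xi> \<inter> W \<longrightarrow> \<xi>' \<in> {\<xi>\<in>X. w \<in> f \<xi>})"
      by (intro exI[of _ W]) simp
  qed auto
  show "openin (subtopology cantor_top X) {\<xi>\<in>X. w \<notin> f \<xi>}"
  proof (rule openin_subtopology_cylinderI)
    fix \<xi> assume \<xi>: "\<xi> \<in> {\<xi>\<in>X. w \<notin> f \<xi>}"
    then obtain W where "finite W" "\<forall>\<xi>'\<in>X. \<xi>' \<inter> W = \<xi> \<inter> W \<longrightarrow> (w \<in> f \<xi>' \<longleftrightarrow> w \<in> f \<xi>)"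
      using assms(2)[of \<xi> w] by auto
    with \<xi> show "\<exists>W. finite W \<and> (\<forall>\<xi>'\<in>X. \<xi>' \<inter> W = \<xi> \<inter> W \<longrightarrow> \<xi>' \<in> {\<xi>\<in>X. w \<notin> f \<xi>})"
      by (intro exI[of _ W]) simp
  qed auto
qed

lemma closedin_by_open_complement:
  assumes "S \<subseteq> X" "closedin cantor_top X" "openin (subtopology cantor_top X) (X - S)"
  shows "closedin cantor_top S"
proof -
  have "closedin (subtopology cantor_top X) S"
    using assms by (simp add: closedin_def)
  then show ?thesis using assms(2) closedin_trans_full by blast
qed

lemma closedin_cylinder_mem: "closedin cantor_top {\<xi>. w \<in> \<xi>}"
proof -
  have "topspace cantor_top - {\<xi>. w \<in> \<xi>} = {\<xi>. w \<notin> \<xi>}" by auto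
  then show ?thesis using openin_cylinder_not_mem by (simp add: closedin_def)
qed

lemma closedin_cylinder_not_mem: "closedin cantor_top {\<xi>. w \<notin> \<xi>}"
proof -
  have "topspace cantor_top - {\<xi>. w \<notin> \<xi>} = {\<xi>. w \<in> \<xi>}" by auto
  then show ?thesis using openin_cylinder_mem by (simp add: closedin_def)
qed

lemma closedin_CC: "closedin cantor_top (CC A)"
proof -
  have "CC A = {\<xi>. [] \<in> \<xi>} \<inter> (\<Inter>w. \<Inter>k. {\<xi>. w \<notin> \<xi>} \<union> {\<xi>. w \<in> fg A \<and> drop k w \<in> \<xi>})"
    by (auto simp: CC_def convex_def)
  moreover have "closedin cantor_top {\<xi>. w \<in> fg A \<and> drop k w \<in> \<xi>}" for w k
    by (cases "w \<in> fg A") (simp_all add: closedin_cylinder_mem)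
  ultimately show ?thesis
    by (auto intro!: closedin_Int closedin_INT closedin_Un
        closedin_cylinder_mem closedin_cylinder_not_mem)
qed

lemma closedin_Omega_F:
  assumes fin: "finite B"
  shows "closedin cantor_top (Omega_F B F)"
proof (rule closedin_by_open_complement[of _ "CC B"])
  show "Omega_F B F \<subseteq> CC B" by (auto simp: Omega_F_def)
  show "closedin cantor_top (CC B)" by (rule closedin_CC)
  show "openin (subtopology cantor_top (CC B)) (CC B - Omega_F B F)"
  proof (rule openin_subtopology_cylinderI)
    fix \<xi> assume "\<xi> \<in> CC B - Omega_F B F"
    then obtain Bn \<alpha> where x: "\<xi> \<in> CC B" "Bn \<in> F" "\<alpha> \<in> \<xi>" "ball_of (snd Bn) (act \<alpha> \<xi>) = fst Bn"
      by (auto simp: Omega_F_def avoids_def)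
    have xf: "\<xi> \<subseteq> fg B" using x(1) by (auto simp: CC_def convex_def)
    have af: "\<alpha> \<in> fg B" using xf x(3) by auto
    let ?W = "{\<alpha>} \<union> (\<lambda>\<delta>. fmult \<delta> \<alpha>) ` {\<delta> \<in> fg B. length \<delta> \<le> snd Bn}"
    show "\<exists>W. finite W \<and> (\<forall>\<xi>'\<in>CC B. \<xi>' \<inter> W = \<xi> \<inter> W \<longrightarrow> \<xi>' \<in> CC B - Omega_F B F)"
    proof (intro exI[of _ ?W] conjI ballI impI)
      show "finite ?W" using finite_fg_length_le[OF fin] by simp
      fix \<xi>' assume x': "\<xi>' \<in> CC B" "\<xi>' \<inter> ?W = \<xi> \<inter> ?W"
      have xf': "\<xi>' \<subseteq> fg B" using x'(1) by (auto simp: CC_def convex_def)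
      have "\<alpha> \<in> \<xi>'" using x' x(3) by blast
      moreover have "ball_of (snd Bn) (act \<alpha> \<xi>') = ball_of (snd Bn) (act \<alpha> \<xi>)"
        unfolding ball_of_act[OF xf af] ball_of_act[OF xf' af] using x'(2) by blast
      ultimately show "\<xi>' \<in> CC B - Omega_F B F"
        using x' x by (auto simp: Omega_F_def avoids_def)
    qed
  qed auto
qed

section \<open>Coding a convex subshift by its balls\<close>

locale finite_convex_subshift =
  fixes A :: "'a set" and \<Omega> :: "'a word set set"
  assumes finite_A: "finite A" and convex_subshift_Omega: "convex_subshift A \<Omega>"
begin

lemma Omega_CC: "\<xi> \<in> \<Omega> \<Longrightarrow> \<xi> \<in> CC A"
  using convex_subshift_Omega by (auto simp: convex_subshift_def)

lemma Omega_subset_fg: "\<xi> \<in> \<Omega> \<Longrightarrow> \<xi> \<subseteq> fg A"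
  using Omega_CC by (auto simp: CC_def convex_def)

lemma Omega_all_reduced: "\<xi> \<in> \<Omega> \<Longrightarrow> all_reduced \<xi>"
  using Omega_subset_fg by (auto simp: all_reduced_def fg_def)

lemma Omega_drop: "\<xi> \<in> \<Omega> \<Longrightarrow> w \<in> \<xi> \<Longrightarrow> drop k w \<in> \<xi>"
  using Omega_CC by (auto simp: CC_def convex_def)

lemma Omega_Nil: "\<xi> \<in> \<Omega> \<Longrightarrow> [] \<in> \<xi>"
  using Omega_CC by (auto simp: CC_def convex_def)

lemma Omega_act: "\<xi> \<in> \<Omega> \<Longrightarrow> \<alpha> \<in> \<xi> \<Longrightarrow> act \<alpha> \<xi> \<in> \<Omega>"
  using convex_subshift_Omega by (auto simp: convex_subshift_def)

lemma Omega_reduced: "\<xi> \<in> \<Omega> \<Longrightarrow> w \<in> \<xi> \<Longrightarrow> reduced w"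
  using Omega_subset_fg by (auto simp: fg_def)

lemma Psi_n_phi_word_Omega: "\<xi> \<in> \<Omega> \<Longrightarrow> \<alpha> \<in> \<xi> \<Longrightarrow> Psi_n (phi_word n \<xi> \<alpha>) = \<alpha>"
  using Psi_n_phi_word freduce_ident Omega_reduced by metis

lemma phi_letter_in_nball_alph:
  assumes \<xi>: "\<xi> \<in> \<Omega>" and sa: "s # \<alpha> \<in> \<xi>"
  shows "fst (phi_letter n \<xi> s \<alpha>) \<in> nball_alph n A \<Omega>"
proof -
  obtain a e where s: "s = (a, e)" by (cases s)
  have red: "reduced (s # \<alpha>)" using Omega_reduced[OF \<xi> sa] .
  have "a \<in> A" using Omega_subset_fg[OF \<xi>] sa s by (auto simp: fg_def)
  have al: "\<alpha> \<in> \<xi>" using Omega_drop[OF \<xi> sa, of 1] by simp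
  show ?thesis
  proof (cases e)
    case True
    let ?\<zeta> = "act \<alpha> \<xi>"
    have z: "?\<zeta> \<in> \<Omega>" using Omega_act[OF \<xi> al] .
    have "act [(a, True)] ?\<zeta> = act (s # \<alpha>) \<xi>" using s True by (simp add: act_act)
    moreover have "[(a, True)] \<in> ?\<zeta>"
    proof -
      have "fmult [(a, True)] \<alpha> = s # \<alpha>"
        using red s True by (simp add: fmult_single_Cons)
      then show ?thesis using mem_act_iff[OF Omega_all_reduced[OF \<xi>], of "[(a,True)]" \<alpha>] sa by simp
    qed
    ultimately show ?thesis using s True z \<open>a \<in> A\<close>
      unfolding nball_alph_def phi_letter_def Let_def by (auto intro!: exI[of _ ?\<zeta>])
  next
    case False
    let ?\<zeta> = "act (s # \<alpha>) \<xi>"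
    have z: "?\<zeta> \<in> \<Omega>" using Omega_act[OF \<xi> sa] .
    have "act [(a, True)] ?\<zeta> = act \<alpha> \<xi>"
      using s False act_inv_letter_cancel[of s \<alpha> \<xi>] by (simp add: act_act inv_letter_def)
    moreover have "[(a, True)] \<in> ?\<zeta>"
    proof -
      have "fmult [(a, True)] (s # \<alpha>) = \<alpha>"
        using red s False by (simp add: fmult_single red_cons_def inv_letter_def)
      then show ?thesis
        using mem_act_iff[OF Omega_all_reduced[OF \<xi>], of "[(a,True)]" "s # \<alpha>"] al by simp
    qed
    ultimately show ?thesis using s False z \<open>a \<in> A\<close>
      unfolding nball_alph_def phi_letter_def Let_def by (auto intro!: exI[of _ ?\<zeta>])
  qed
qed

lemma phi_word_in_fg:
  assumes \<xi>: "\<xi> \<in> \<Omega>"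
  shows "\<alpha> \<in> \<xi> \<Longrightarrow> phi_word n \<xi> \<alpha> \<in> fg (nball_alph n A \<Omega>)"
proof (induction \<alpha>)
  case Nil then show ?case by (simp add: fg_def)
next
  case (Cons s \<alpha>)
  have al: "\<alpha> \<in> \<xi>" using Omega_drop[OF \<xi> Cons.prems, of 1] by simp
  have "phi_word n \<xi> (s # \<alpha>) = phi_letter n \<xi> s \<alpha> # phi_word n \<xi> \<alpha>"
    using phi_word_Cons Omega_reduced[OF \<xi> Cons.prems] by blast
  moreover have "reduced (phi_word n \<xi> (s # \<alpha>))" by (rule reduced_phi_word)
  ultimately show ?case using Cons.IH[OF al] phi_letter_in_nball_alph[OF \<xi> Cons.prems, of n]
    by (simp add: fg_def del: phi_word.simps(2))
qed

lemma Omega_n_subset_fg: "\<eta> \<in> Omega_n n \<Omega> \<Longrightarrow> \<eta> \<subseteq> fg (nball_alph n A \<Omega>)"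
  using phi_word_in_fg by (auto simp: Omega_n_def phi_n_def)

lemma psi_n_phi_n: "\<xi> \<in> \<Omega> \<Longrightarrow> psi_n (phi_n n \<xi>) = \<xi>"
  by (simp add: psi_n_phi_n_all_reduced Omega_all_reduced)

lemma Psi_n_in_fg: "g \<in> fg (nball_alph n A \<Omega>) \<Longrightarrow> Psi_n g \<in> fg A"
proof -
  assume g: "g \<in> fg (nball_alph n A \<Omega>)"
  have "fst x \<in> nball_alph n A \<Omega> \<Longrightarrow> fst (base_letter x) \<in> A" for x
    by (auto simp: nball_alph_def base_letter_def)
  then have "fst ` set (map base_letter g) \<subseteq> A" using g by (auto simp: fg_def)
  then show ?thesis
    using set_freduce[of "map base_letter g"] by (auto 0 4 simp: fg_def Psi_n_eq_freduce_base)
qed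

lemma finite_nball_alph: "finite (nball_alph n A \<Omega>)"
proof -
  let ?W = "Pow {w \<in> fg A. length w \<le> n}"
  have "nball_alph n A \<Omega> \<subseteq> ?W \<times> A \<times> ?W"
  proof
    fix x assume "x \<in> nball_alph n A \<Omega>"
    then obtain \<xi> a where x: "x = (ball_of n (act [(a, True)] \<xi>), a, ball_of n \<xi>)"
      "\<xi> \<in> \<Omega>" "a \<in> A" "[(a, True)] \<in> \<xi>" by (auto simp: nball_alph_def)
    have "act [(a, True)] \<xi> \<subseteq> fg A"
      using x by (intro act_subset_fg Omega_subset_fg) (auto simp: fg_def)
    then show "x \<in> ?W \<times> A \<times> ?W" using x Omega_subset_fg[OF x(2)] by (auto simp: ball_of_def)
  qed
  moreover have "finite (?W \<times> A \<times> ?W)" using finite_fg_length_le[OF finite_A] finite_A by simp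
  ultimately show ?thesis by (rule finite_subset)
qed

lemma mem_phi_n_iff:
  assumes "\<xi> \<in> \<Omega>"
  shows "\<beta> \<in> phi_n n \<xi> \<longleftrightarrow> map base_letter \<beta> \<in> \<xi> \<and> phi_word n \<xi> (map base_letter \<beta>) = \<beta>"
proof
  assume "\<beta> \<in> phi_n n \<xi>"
  then obtain \<alpha> where "\<alpha> \<in> \<xi>" "\<beta> = phi_word n \<xi> \<alpha>" by (auto simp: phi_n_def)
  moreover then have "map base_letter \<beta> = \<alpha>"
    using map_base_phi_word Omega_reduced[OF assms] by blast
  ultimately show "map base_letter \<beta> \<in> \<xi> \<and> phi_word n \<xi> (map base_letter \<beta>) = \<beta>" by simp
next
  assume "map base_letter \<beta> \<in> \<xi> \<and> phi_word n \<xi> (map base_letter \<beta>) = \<beta>"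
  then show "\<beta> \<in> phi_n n \<xi>" unfolding phi_n_def by (metis image_eqI)
qed

text \<open>The words of \<open>\<xi>\<close> on which \<open>phi_word n \<xi> \<alpha>\<close> depends: they determine the
  \<open>n\<close>-balls at all suffixes of \<open>\<alpha>\<close>.\<close>

definition window :: "nat \<Rightarrow> 'a word \<Rightarrow> 'a word set" where
  "window n \<alpha> = {fmult \<delta> (drop k \<alpha>) | \<delta> k. \<delta> \<in> fg A \<and> length \<delta> \<le> n}"

lemma finite_window: "finite (window n \<alpha>)"
proof -
  have "window n \<alpha> \<subseteq> (\<lambda>(\<delta>,k). fmult \<delta> (drop k \<alpha>)) ` ({\<delta> \<in> fg A. length \<delta> \<le> n} \<times> {0..length \<alpha>})"
  proof
    fix w assume "w \<in> window n \<alpha>"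
    then obtain \<delta> k where w: "w = fmult \<delta> (drop k \<alpha>)" "\<delta> \<in> fg A" "length \<delta> \<le> n"
      by (auto simp: window_def)
    have "drop k \<alpha> = drop (min k (length \<alpha>)) \<alpha>" by (simp add: min_def)
    then show "w \<in> (\<lambda>(\<delta>,k). fmult \<delta> (drop k \<alpha>)) ` ({\<delta> \<in> fg A. length \<delta> \<le> n} \<times> {0..length \<alpha>})"
      using w by (intro image_eqI[of _ _ "(\<delta>, min k (length \<alpha>))"]) auto
  qed
  moreover have "finite ({\<delta> \<in> fg A. length \<delta> \<le> n} \<times> {0..length \<alpha>})"
    using finite_fg_length_le[OF finite_A] by simp
  ultimately show ?thesis using finite_subset by blast
qed

lemma phi_word_cong_balls:
  "(\<forall>k. ball_of n (act (drop k \<alpha>) \<xi>) = ball_of n (act (drop k \<alpha>) \<xi>')) \<Longrightarrow>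
    phi_word n \<xi> \<alpha> = phi_word n \<xi>' \<alpha>"
proof (induction \<alpha>)
  case (Cons s \<alpha>)
  have "\<forall>k. ball_of n (act (drop k \<alpha>) \<xi>) = ball_of n (act (drop k \<alpha>) \<xi>')"
  proof
    fix k show "ball_of n (act (drop k \<alpha>) \<xi>) = ball_of n (act (drop k \<alpha>) \<xi>')"
      using Cons.prems[rule_format, of "Suc k"] by simp
  qed
  moreover have "ball_of n (act \<alpha> \<xi>) = ball_of n (act \<alpha> \<xi>')"
    using Cons.prems[rule_format, of 1] by simp
  moreover have "ball_of n (act (s # \<alpha>) \<xi>) = ball_of n (act (s # \<alpha>) \<xi>')"
    using Cons.prems[rule_format, of 0] by simp
  ultimately show ?case using Cons.IH by (simp add: phi_letter_def)
qed simp

lemma phi_word_cong_window: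
  assumes "\<xi> \<subseteq> fg A" "\<xi>' \<subseteq> fg A" "\<alpha> \<in> fg A" "\<forall>w\<in>window n \<alpha>. w \<in> \<xi> \<longleftrightarrow> w \<in> \<xi>'"
  shows "phi_word n \<xi> \<alpha> = phi_word n \<xi>' \<alpha>"
proof (rule phi_word_cong_balls, rule allI)
  fix k
  have d: "drop k \<alpha> \<in> fg A" using assms(3) by (rule fg_drop)
  show "ball_of n (act (drop k \<alpha>) \<xi>) = ball_of n (act (drop k \<alpha>) \<xi>')"
    unfolding ball_of_act[OF assms(1) d] ball_of_act[OF assms(2) d]
    using assms(4) unfolding window_def by blast
qed

lemma Omega_nE:
  assumes "\<eta> \<in> Omega_n n \<Omega>"
  obtains \<xi> where "\<xi> \<in> \<Omega>" "\<eta> = phi_n n \<xi>"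
  using assms by (auto simp: Omega_n_def)

lemma mem_Omega_nE:
  assumes "\<eta> \<in> Omega_n n \<Omega>" "\<beta> \<in> \<eta>"
  obtains \<xi> \<alpha> where "\<xi> \<in> \<Omega>" "\<eta> = phi_n n \<xi>" "\<alpha> \<in> \<xi>" "\<beta> = phi_word n \<xi> \<alpha>"
  using assms by (auto simp: Omega_n_def phi_n_def)

lemma continuous_psi_n:
  "continuous_map (subtopology cantor_top (Omega_n n \<Omega>)) (subtopology cantor_top \<Omega>) psi_n"
proof (rule continuous_map_cantor_topI)
  show "psi_n ` Omega_n n \<Omega> \<subseteq> \<Omega>" using psi_n_phi_n by (auto simp: Omega_n_def)
next
  fix w :: "'a word" and \<eta>
  define W where "W = {\<beta>. set \<beta> \<subseteq> nball_alph n A \<Omega> \<times> (UNIV :: bool set) \<and> length \<beta> \<le> length w}"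
  have preimage: "\<beta> \<in> W" if \<beta>: "\<eta> \<in> Omega_n n \<Omega>" "\<beta> \<in> \<eta>" "Psi_n \<beta> = w" for \<eta> \<beta>
  proof -
    obtain \<xi> \<alpha> where \<alpha>: "\<xi> \<in> \<Omega>" "\<alpha> \<in> \<xi>" "\<beta> = phi_word n \<xi> \<alpha>"
      using \<beta>(1,2) by (blast elim: mem_Omega_nE)
    have "\<alpha> = w" using Psi_n_phi_word_Omega[OF \<alpha>(1,2)] \<alpha>(3) \<beta>(3) by simp
    moreover have "length \<beta> = length \<alpha>"
      using length_phi_word Omega_reduced[OF \<alpha>(1,2)] \<alpha>(3) by simp
    moreover have "\<beta> \<in> fg (nball_alph n A \<Omega>)" using phi_word_in_fg[OF \<alpha>(1,2)] \<alpha>(3) by simp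
    ultimately show ?thesis by (auto simp: W_def fg_def)
  qed
  show "\<exists>W. finite W \<and> (\<forall>\<eta>'\<in>Omega_n n \<Omega>. \<eta>' \<inter> W = \<eta> \<inter> W \<longrightarrow> (w \<in> psi_n \<eta>' \<longleftrightarrow> w \<in> psi_n \<eta>))"
    if "\<eta> \<in> Omega_n n \<Omega>"
  proof (intro exI[of _ W] conjI ballI impI)
    show "finite W" unfolding W_def by (rule finite_words_length_le[OF finite_nball_alph])
    fix \<eta>' assume "\<eta>' \<in> Omega_n n \<Omega>" "\<eta>' \<inter> W = \<eta> \<inter> W"
    then show "w \<in> psi_n \<eta>' \<longleftrightarrow> w \<in> psi_n \<eta>"
      using preimage[of \<eta>'] preimage[OF that] by (auto simp: psi_n_def)
  qed
qed

lemma continuous_phi_n: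
  "continuous_map (subtopology cantor_top \<Omega>) (subtopology cantor_top (Omega_n n \<Omega>)) (phi_n n)"
proof (rule continuous_map_cantor_topI)
  show "phi_n n ` \<Omega> \<subseteq> Omega_n n \<Omega>" by (auto simp: Omega_n_def)
next
  fix \<beta> :: "'a nsym word" and \<xi>
  assume \<xi>: "\<xi> \<in> \<Omega>"
  define \<alpha> where "\<alpha> = map base_letter \<beta>"
  show "\<exists>W. finite W \<and> (\<forall>\<xi>'\<in>\<Omega>. \<xi>' \<inter> W = \<xi> \<inter> W \<longrightarrow> (\<beta> \<in> phi_n n \<xi>' \<longleftrightarrow> \<beta> \<in> phi_n n \<xi>))"
  proof (intro exI[of _ "insert \<alpha> (window n \<alpha>)"] conjI ballI impI)
    show "finite (insert \<alpha> (window n \<alpha>))" by (simp add: finite_window)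
    fix \<xi>' assume \<xi>': "\<xi>' \<in> \<Omega>" "\<xi>' \<inter> insert \<alpha> (window n \<alpha>) = \<xi> \<inter> insert \<alpha> (window n \<alpha>)"
    then have "\<alpha> \<in> \<xi>' \<longleftrightarrow> \<alpha> \<in> \<xi>" by blast
    moreover have "phi_word n \<xi>' \<alpha> = phi_word n \<xi> \<alpha>" if "\<alpha> \<in> \<xi>"
      using Omega_subset_fg[OF \<xi>'(1)] Omega_subset_fg[OF \<xi>] that \<xi>'(2)
      by (intro phi_word_cong_window) blast+
    ultimately show "\<beta> \<in> phi_n n \<xi>' \<longleftrightarrow> \<beta> \<in> phi_n n \<xi>"
      unfolding mem_phi_n_iff[OF \<xi>'(1)] mem_phi_n_iff[OF \<xi>] \<alpha>_def by metis
  qed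
qed

lemma homeomorphic_map_psi_n:
  "homeomorphic_map (subtopology cantor_top (Omega_n n \<Omega>)) (subtopology cantor_top \<Omega>) psi_n"
  unfolding homeomorphic_map_maps homeomorphic_maps_def
proof (intro exI[of _ "phi_n n"] conjI ballI continuous_psi_n continuous_phi_n)
  fix \<eta> assume "\<eta> \<in> topspace (subtopology cantor_top (Omega_n n \<Omega>))"
  then show "phi_n n (psi_n \<eta>) = \<eta>" by (auto simp: psi_n_phi_n elim: Omega_nE)
qed (simp add: psi_n_phi_n)

lemma psi_n_cdom: "psi_n ` cdom (Omega_n n \<Omega>) g \<subseteq> cdom \<Omega> (Psi_n g)"
proof
  fix \<xi> assume "\<xi> \<in> psi_n ` cdom (Omega_n n \<Omega>) g"
  then obtain \<eta> where \<eta>: "\<eta> \<in> Omega_n n \<Omega>" "finv g \<in> \<eta>" "\<xi> = psi_n \<eta>"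
    by (auto simp: cdom_def)
  moreover have "\<xi> \<in> \<Omega>" using \<eta> by (auto simp: psi_n_phi_n elim: Omega_nE)
  moreover have "Psi_n (finv g) \<in> psi_n \<eta>" using \<eta>(2) by (simp add: psi_n_def)
  ultimately show "\<xi> \<in> cdom \<Omega> (Psi_n g)" by (simp add: cdom_def Psi_n_finv)
qed

text \<open>\<open>\<Psi>\<^sub>n\<close> is injective on each configuration of \<open>\<Omega>\<^sup>[\<^sup>n\<^sup>]\<close>.\<close>

lemma cdom_Omega_n_disjoint:
  assumes "Psi_n g = Psi_n g'" "g \<noteq> g'"
  shows "cdom (Omega_n n \<Omega>) g \<inter> cdom (Omega_n n \<Omega>) g' = {}"
proof (rule ccontr)
  assume "cdom (Omega_n n \<Omega>) g \<inter> cdom (Omega_n n \<Omega>) g' \<noteq> {}"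
  then obtain \<eta> where \<eta>: "\<eta> \<in> Omega_n n \<Omega>" "finv g \<in> \<eta>" "finv g' \<in> \<eta>"
    by (auto simp: cdom_def)
  obtain \<xi> where \<xi>: "\<xi> \<in> \<Omega>" "\<eta> = phi_n n \<xi>" using \<eta>(1) by (rule Omega_nE)
  have "finv g = phi_word n \<xi> (finv (Psi_n g))" if g: "finv g \<in> \<eta>" for g
  proof -
    obtain \<alpha> where "\<alpha> \<in> \<xi>" "finv g = phi_word n \<xi> \<alpha>" using g \<xi>(2) by (auto simp: phi_n_def)
    then show ?thesis using Psi_n_phi_word_Omega[OF \<xi>(1), of \<alpha> n] by (simp flip: Psi_n_finv)
  qed
  then have "finv g = finv g'" using \<eta>(2,3) assms(1) by metis
  then show False using assms(2) by (metis finv_finv)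
qed

lemma cdom_Omega_eq_UN:
  "cdom \<Omega> h = (\<Union>g\<in>{g\<in>fg (nball_alph n A \<Omega>). Psi_n g = h}. psi_n ` cdom (Omega_n n \<Omega>) g)"
proof (intro equalityI subsetI)
  fix \<xi> assume "\<xi> \<in> cdom \<Omega> h"
  then have \<xi>: "\<xi> \<in> \<Omega>" "finv h \<in> \<xi>" by (auto simp: cdom_def)
  define g where "g = finv (phi_word n \<xi> (finv h))"
  have "g \<in> fg (nball_alph n A \<Omega>)" using phi_word_in_fg[OF \<xi>] by (simp add: g_def fg_finv)
  moreover have "Psi_n g = h" using Psi_n_phi_word_Omega[OF \<xi>] by (simp add: g_def Psi_n_finv)
  moreover have "phi_n n \<xi> \<in> cdom (Omega_n n \<Omega>) g"
    using \<xi> by (auto simp: g_def cdom_def Omega_n_def phi_n_def)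
  ultimately show "\<xi> \<in> (\<Union>g\<in>{g\<in>fg (nball_alph n A \<Omega>). Psi_n g = h}. psi_n ` cdom (Omega_n n \<Omega>) g)"
    using psi_n_phi_n[OF \<xi>(1)] by force
qed (use psi_n_cdom in blast)

lemma direct_dyn_equiv_psi_n: "direct_dyn_equiv (nball_alph n A \<Omega>) (Omega_n n \<Omega>) A \<Omega> psi_n Psi_n"
  unfolding direct_dyn_equiv_def fg_hom_def
  by (intro conjI ballI impI)
    (simp_all add: Psi_n_in_fg Psi_n_fmult continuous_psi_n psi_n_cdom psi_n_act
      homeomorphic_map_psi_n cdom_Omega_n_disjoint cdom_Omega_eq_UN)

lemma Omega_n_CC: "\<eta> \<in> Omega_n n \<Omega> \<Longrightarrow> \<eta> \<in> CC (nball_alph n A \<Omega>)"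
proof -
  assume e: "\<eta> \<in> Omega_n n \<Omega>"
  then obtain \<xi> where \<xi>: "\<xi> \<in> \<Omega>" "\<eta> = phi_n n \<xi>" using Omega_nE by blast
  have "[] \<in> \<eta>" using \<xi> Omega_Nil[OF \<xi>(1)] by (auto simp: phi_n_def intro: image_eqI[of _ _ "[]"])
  moreover have "drop k w \<in> \<eta>" if wi: "w \<in> \<eta>" for w k
  proof -
    obtain \<alpha> where a: "\<alpha> \<in> \<xi>" "w = phi_word n \<xi> \<alpha>" using wi \<xi> by (auto simp: phi_n_def)
    have "drop k w = phi_word n \<xi> (drop k \<alpha>)"
      using drop_phi_word Omega_reduced[OF \<xi>(1) a(1)] a by blast
    then show ?thesis using Omega_drop[OF \<xi>(1) a(1)] \<xi> by (auto simp: phi_n_def)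
  qed
  ultimately show ?thesis using Omega_n_subset_fg[OF e] by (auto simp: CC_def convex_def)
qed

lemma Omega_n_act: "\<eta> \<in> Omega_n n \<Omega> \<Longrightarrow> \<beta> \<in> \<eta> \<Longrightarrow> act \<beta> \<eta> \<in> Omega_n n \<Omega>"
proof -
  assume e: "\<eta> \<in> Omega_n n \<Omega>" "\<beta> \<in> \<eta>"
  then obtain \<xi> where \<xi>: "\<xi> \<in> \<Omega>" "\<eta> = phi_n n \<xi>" using Omega_nE by blast
  then obtain \<alpha> where a: "\<alpha> \<in> \<xi>" "\<beta> = phi_word n \<xi> \<alpha>" using e by (auto simp: phi_n_def)
  have "act \<beta> \<eta> = phi_n n (act \<alpha> \<xi>)"
    using act_phi_word_phi_n[OF Omega_all_reduced[OF \<xi>(1)]] \<xi> a by simp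
  then show ?thesis using Omega_act[OF \<xi>(1) a(1)] by (auto simp: Omega_n_def)
qed

end

section \<open>Subshifts of finite type\<close>

locale finite_type_subshift = finite_convex_subshift +
  fixes F0 :: "('a word set \<times> nat) set" and N :: nat
  assumes Omega_eq: "\<Omega> = Omega_F A F0" and radius_le_N: "\<forall>Bn\<in>F0. snd Bn \<le> N"
begin

abbreviation A' :: "'a nsym set" where "A' \<equiv> nball_alph N A \<Omega>"

definition forbidden_1balls :: "('a nsym word set \<times> nat) set" where
  "forbidden_1balls = {Bn. is_ball A' Bn \<and> snd Bn = 1 \<and>
     (\<forall>\<eta>\<in>Omega_n N \<Omega>. \<forall>\<beta>\<in>\<eta>. ball_of 1 (act \<beta> \<eta>) \<noteq> fst Bn)}"

lemma finite_forbidden_1balls: "finite forbidden_1balls"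
proof (rule finite_subset)
  show "forbidden_1balls \<subseteq> Pow {w \<in> fg A'. length w \<le> 1} \<times> {1}"
    by (auto simp: forbidden_1balls_def is_ball_def CC_def convex_def)
  show "finite (Pow {w \<in> fg A'. length w \<le> 1} \<times> {1::nat})"
    using finite_fg_length_le[OF finite_nball_alph] by simp
qed

lemma Omega_n_subset_Omega_F: "Omega_n N \<Omega> \<subseteq> Omega_F A' forbidden_1balls"
  using Omega_n_CC by (auto simp: Omega_F_def forbidden_1balls_def avoids_def)

lemma ball_of_1_CC:
  assumes "\<eta> \<in> CC A'" "\<beta> \<in> \<eta>"
  shows "ball_of 1 (act \<beta> \<eta>) \<in> CC A'"
proof -
  have \<eta>: "\<eta> \<subseteq> fg A'" using assms(1) by (auto simp: CC_def convex_def)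
  then have \<beta>: "\<beta> \<in> fg A'" using assms(2) by auto
  have Nil: "[] \<in> act \<beta> \<eta>"
    using mem_act_iff[of \<eta> "[]" \<beta>] assms(2) \<beta> \<eta>
    by (auto simp: fmult_Nil_left all_reduced_def fg_def)
  show ?thesis
    unfolding CC_def convex_def
  proof (intro CollectI conjI ballI allI)
    show "ball_of 1 (act \<beta> \<eta>) \<subseteq> fg A'" using act_subset_fg[OF \<eta> \<beta>] by (auto simp: ball_of_def)
    show "[] \<in> ball_of 1 (act \<beta> \<eta>)" using Nil by (simp add: ball_of_def)
    fix w k assume "w \<in> ball_of 1 (act \<beta> \<eta>)"
    then show "drop k w \<in> ball_of 1 (act \<beta> \<eta>)"
      using drop_length_le_1[of w k] Nil by (auto simp: ball_of_def)
  qed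
qed

lemma local_coding_witness:
  assumes \<eta>: "\<eta> \<in> CC A'" "\<forall>Bn\<in>forbidden_1balls. avoids \<eta> Bn" and \<beta>: "\<beta> \<in> \<eta>"
  shows "\<exists>\<zeta>\<in>\<Omega>. ball_of 1 (act \<beta> \<eta>) = ball_of 1 (phi_n N \<zeta>)"
proof -
  let ?B = "ball_of 1 (act \<beta> \<eta>)"
  have "(?B, 1) \<notin> forbidden_1balls" using \<eta>(2) \<beta> by (force simp: avoids_def)
  moreover have "is_ball A' (?B, 1)"
    using ball_of_1_CC[OF \<eta>(1) \<beta>] by (simp add: is_ball_def ball_of_def)
  ultimately obtain \<eta>0 \<beta>0 where "\<eta>0 \<in> Omega_n N \<Omega>" "\<beta>0 \<in> \<eta>0" "ball_of 1 (act \<beta>0 \<eta>0) = ?B"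
    by (auto simp: forbidden_1balls_def)
  then obtain \<zeta> \<alpha> where \<zeta>: "\<zeta> \<in> \<Omega>" "\<alpha> \<in> \<zeta>" "ball_of 1 (phi_n N (act \<alpha> \<zeta>)) = ?B"
    by (elim mem_Omega_nE) (auto simp: act_phi_word_phi_n Omega_all_reduced)
  then show ?thesis using Omega_act by metis
qed

end

text \<open>Every letter of \<open>\<eta>\<close> records the \<open>N\<close>-balls at both of its
  ends, and \<open>local_ball \<beta>\<close> is the ball recorded at \<open>\<beta>\<close>.\<close>

locale locally_coded = finite_type_subshift +
  fixes \<eta> :: "'a nsym word set" and Z :: "'a nsym word \<Rightarrow> 'a word set"
  assumes eta_CC: "\<eta> \<in> CC A'"
    and Z: "\<And>\<beta>. \<beta> \<in> \<eta> \<Longrightarrow> Z \<beta> \<in> \<Omega> \<and> ball_of 1 (act \<beta> \<eta>) = ball_of 1 (phi_n N (Z \<beta>))"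
begin

lemma eta_subset_fg: "\<eta> \<subseteq> fg A'"
  using eta_CC by (auto simp: CC_def convex_def)

lemma eta_all_reduced: "all_reduced \<eta>"
  using eta_subset_fg by (auto simp: all_reduced_def fg_def)

lemma eta_reduced: "\<beta> \<in> \<eta> \<Longrightarrow> reduced \<beta>"
  using eta_subset_fg by (auto simp: fg_def)

lemma eta_drop: "\<beta> \<in> \<eta> \<Longrightarrow> drop k \<beta> \<in> \<eta>"
  using eta_CC by (auto simp: CC_def convex_def)

lemma eta_Nil: "[] \<in> \<eta>"
  using eta_CC by (auto simp: CC_def convex_def)

lemma eta_tl: "x # \<beta> \<in> \<eta> \<Longrightarrow> \<beta> \<in> \<eta>"
  using eta_drop[of "x # \<beta>" 1] by simp

lemma Z_in_Omega: "\<beta> \<in> \<eta> \<Longrightarrow> Z \<beta> \<in> \<Omega>"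
  using Z by blast

lemma Z_all_reduced: "\<beta> \<in> \<eta> \<Longrightarrow> all_reduced (Z \<beta>)"
  using Z_in_Omega Omega_all_reduced by blast

definition local_ball :: "'a nsym word \<Rightarrow> 'a word set" where
  "local_ball \<beta> = ball_of N (Z \<beta>)"

lemma extension_letter_iff:
  assumes \<beta>: "\<beta> \<in> \<eta>"
  shows "fmult [x] \<beta> \<in> \<eta> \<longleftrightarrow> (\<exists>s. [s] \<in> Z \<beta> \<and> x = phi_letter N (Z \<beta>) s [])"
proof -
  have "fmult [x] \<beta> \<in> \<eta> \<longleftrightarrow> [x] \<in> ball_of 1 (act \<beta> \<eta>)"
    using mem_act_iff[OF eta_all_reduced, of "[x]" \<beta>] by (simp add: ball_of_def)
  also have "\<dots> \<longleftrightarrow> [x] \<in> phi_n N (Z \<beta>)" using Z[OF \<beta>] by (simp add: ball_of_def)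
  also have "\<dots> \<longleftrightarrow> (\<exists>s. [s] \<in> Z \<beta> \<and> x = phi_letter N (Z \<beta>) s [])"
    by (rule singleton_in_phi_n_iff[OF Z_all_reduced[OF \<beta>]])
  finally show ?thesis .
qed

lemma sym_source_extension_letter:
  "\<beta> \<in> \<eta> \<Longrightarrow> fmult [x] \<beta> \<in> \<eta> \<Longrightarrow> sym_source x = local_ball \<beta>"
  using extension_letter_iff sym_source_phi_letter_Nil Z_all_reduced local_ball_def by metis

lemma sym_target_extension_letter:
  "\<beta> \<in> \<eta> \<Longrightarrow> fmult [x] \<beta> \<in> \<eta> \<Longrightarrow> sym_target x = ball_of N (act [base_letter x] (Z \<beta>))"
  using extension_letter_iff sym_target_phi_letter_Nil base_phi_letter by metis

lemma extension_letter_in_Z: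
  "\<beta> \<in> \<eta> \<Longrightarrow> fmult [x] \<beta> \<in> \<eta> \<Longrightarrow> [base_letter x] \<in> Z \<beta>"
  using extension_letter_iff base_phi_letter by metis

lemma extension_letter_unique:
  "\<beta> \<in> \<eta> \<Longrightarrow> fmult [x] \<beta> \<in> \<eta> \<Longrightarrow> fmult [y] \<beta> \<in> \<eta> \<Longrightarrow> base_letter x = base_letter y \<Longrightarrow> x = y"
  using extension_letter_iff base_phi_letter by metis

lemma extension_letter_exists:
  "\<beta> \<in> \<eta> \<Longrightarrow> [t] \<in> Z \<beta> \<Longrightarrow> \<exists>x. fmult [x] \<beta> \<in> \<eta> \<and> base_letter x = t"
  using extension_letter_iff base_phi_letter by metis

lemma fmult_hd_eta: "x # \<beta> \<in> \<eta> \<Longrightarrow> fmult [x] \<beta> = x # \<beta>"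
  using eta_reduced fmult_single_Cons by blast

lemma fmult_inv_hd_eta: "x # \<beta> \<in> \<eta> \<Longrightarrow> fmult [inv_letter x] (x # \<beta>) = \<beta>"
  using eta_reduced[of "x # \<beta>"] by (simp add: fmult_single red_cons_def)

lemma local_ball_extension_letter:
  assumes \<beta>: "\<beta> \<in> \<eta>" and x: "fmult [x] \<beta> \<in> \<eta>"
  shows "local_ball (fmult [x] \<beta>) = ball_of N (act [base_letter x] (Z \<beta>))"
proof -
  have "fmult [inv_letter x] [x] = []"
    using fmult_finv_left[of "[x]"] by (simp add: finv_def)
  then have "fmult [inv_letter x] (fmult [x] \<beta>) = \<beta>"
    using eta_reduced[OF \<beta>] by (simp add: fmult_assoc[symmetric] fmult_Nil_left)
  then have "sym_target x = local_ball (fmult [x] \<beta>)"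
    using sym_source_extension_letter[OF x, of "inv_letter x"] \<beta> by simp
  then show ?thesis using sym_target_extension_letter[OF \<beta> x] by simp
qed

lemma reduced_map_base_eta: "\<beta> \<in> \<eta> \<Longrightarrow> reduced (map base_letter \<beta>)"
proof (induction \<beta>)
  case (Cons x \<beta>)
  have \<beta>: "\<beta> \<in> \<eta>" using eta_tl[OF Cons.prems] .
  show ?case
  proof (cases \<beta>)
    case (Cons y \<beta>')
    have "fmult [x] \<beta> \<in> \<eta>" using fmult_hd_eta[OF Cons.prems] Cons.prems by simp
    moreover have "fmult [inv_letter y] \<beta> \<in> \<eta>"
      using fmult_inv_hd_eta[of y \<beta>'] \<beta> Cons eta_tl[of y \<beta>'] by simp
    moreover have "x \<noteq> inv_letter y"
      using eta_reduced[OF Cons.prems] Cons by (auto simp: inv_letter_eq_iff)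
    ultimately have "base_letter x \<noteq> inv_letter (base_letter y)"
      using extension_letter_unique[OF \<beta>] by fastforce
    then show ?thesis using Cons.IH[OF \<beta>] Cons by (auto simp: inv_letter_eq_iff)
  qed simp
qed simp

lemma Psi_n_eta: "\<beta> \<in> \<eta> \<Longrightarrow> Psi_n \<beta> = map base_letter \<beta>"
  using reduced_map_base_eta Psi_n_eq_map_base by blast

lemma map_base_extension_letter:
  "\<beta> \<in> \<eta> \<Longrightarrow> fmult [x] \<beta> \<in> \<eta> \<Longrightarrow>
    map base_letter (fmult [x] \<beta>) = fmult [base_letter x] (map base_letter \<beta>)"
  using Psi_n_eta Psi_n_fmult[of "[x]" \<beta>] by simp

lemma inj_on_map_base_eta: "inj_on (map base_letter) \<eta>"
proof (rule inj_onI)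
  show "\<beta> = \<beta>'" if "\<beta> \<in> \<eta>" "\<beta>' \<in> \<eta>" "map base_letter \<beta> = map base_letter \<beta>'" for \<beta> \<beta>'
    using that
  proof (induction \<beta> arbitrary: \<beta>')
    case (Cons x \<beta>)
    obtain x' \<beta>'' where \<beta>': "\<beta>' = x' # \<beta>''" using Cons.prems(3) by (cases \<beta>') auto
    have \<beta>: "\<beta> \<in> \<eta>" "\<beta>'' \<in> \<eta>"
      using eta_tl Cons.prems(1) Cons.prems(2)[unfolded \<beta>'] by blast+
    have "\<beta> = \<beta>''" using Cons.IH[OF \<beta>] Cons.prems(3) \<beta>' by simp
    moreover have "fmult [x] \<beta> \<in> \<eta>" "fmult [x'] \<beta> \<in> \<eta>"
      using fmult_hd_eta Cons.prems(1) Cons.prems(2)[unfolded \<beta>'] \<open>\<beta> = \<beta>''\<close> by simp_all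
    then have "x = x'" using extension_letter_unique[OF \<beta>(1)] Cons.prems(3) \<beta>' by simp
    ultimately show ?case using \<beta>' by simp
  qed simp
qed

definition decoded :: "'a word set" where
  "decoded = map base_letter ` \<eta>"

lemma map_base_in_decoded: "\<beta> \<in> \<eta> \<Longrightarrow> map base_letter \<beta> \<in> decoded"
  by (simp add: decoded_def)

lemma decoded_subset_fg: "decoded \<subseteq> fg A"
proof
  fix w assume "w \<in> decoded"
  then obtain \<beta> where \<beta>: "\<beta> \<in> \<eta>" "w = map base_letter \<beta>" by (auto simp: decoded_def)
  have "fst x \<in> A'" if "x \<in> set \<beta>" for x using eta_subset_fg \<beta> that by (auto simp: fg_def)
  then have "fst (base_letter x) \<in> A" if "x \<in> set \<beta>" for x
    using that unfolding nball_alph_def base_letter_def by fastforce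
  then show "w \<in> fg A" using \<beta> reduced_map_base_eta by (auto simp: fg_def)
qed

lemma decoded_drop: "w \<in> decoded \<Longrightarrow> drop k w \<in> decoded"
  by (auto simp: decoded_def drop_map intro: eta_drop)

lemma decoded_CC: "decoded \<in> CC A"
  using decoded_subset_fg decoded_drop eta_Nil by (force simp: CC_def convex_def decoded_def)

lemma extension_letter_decoded:
  assumes \<beta>: "\<beta> \<in> \<eta>" and t: "fmult [t] (map base_letter \<beta>) \<in> decoded"
  shows "\<exists>x. fmult [x] \<beta> \<in> \<eta> \<and> base_letter x = t"
proof (cases "\<exists>x \<beta>'. \<beta> = x # \<beta>' \<and> base_letter x = inv_letter t")
  case True
  then obtain x \<beta>' where x: "\<beta> = x # \<beta>'" "base_letter x = inv_letter t" by blast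
  then have "fmult [inv_letter x] \<beta> \<in> \<eta>" using fmult_inv_hd_eta \<beta> eta_tl by simp
  then show ?thesis using x(2) by (intro exI[of _ "inv_letter x"]) simp
next
  case False
  then have "reduced (t # map base_letter \<beta>)"
    using reduced_map_base_eta[OF \<beta>] by (cases \<beta>) (auto simp: reduced_Cons)
  then have "t # map base_letter \<beta> \<in> decoded" using t by (simp add: fmult_single_Cons)
  then obtain y \<beta>' where
    y: "y # \<beta>' \<in> \<eta>" "base_letter y = t" "map base_letter \<beta>' = map base_letter \<beta>"
    by (auto simp: decoded_def Cons_eq_map_conv)
  then have "\<beta>' = \<beta>" using inj_onD[OF inj_on_map_base_eta] \<beta> eta_tl by metis
  then show ?thesis using y fmult_hd_eta by (intro exI[of _ y]) simp
qed

lemma fmult_snoc_notin_decoded: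
  assumes \<beta>: "\<beta> \<in> \<eta>" and "[t] \<notin> Z \<beta>" "reduced (\<delta> @ [t])"
  shows "fmult (\<delta> @ [t]) (map base_letter \<beta>) \<notin> decoded"
proof
  assume "fmult (\<delta> @ [t]) (map base_letter \<beta>) \<in> decoded"
  then have "fmult [t] (map base_letter \<beta>) \<in> decoded"
    using fmult_last_letter_mem[of decoded] decoded_drop map_base_in_decoded[OF \<beta>]
      reduced_map_base_eta[OF \<beta>] assms(3) by blast
  with assms(2) show False
    using extension_letter_decoded[OF \<beta>] extension_letter_in_Z[OF \<beta>] by blast
qed

text \<open>By induction on \<open>\<delta>\<close> from its last letter \<open>t\<close>: the letter of \<open>\<eta>\<close> reading \<open>t\<close> at \<open>\<beta>\<close>
  leads to a word whose recorded ball is the ball of \<open>Z \<beta>\<close> seen from \<open>t\<close>.\<close>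

lemma fmult_in_decoded_iff:
  assumes "\<delta> \<in> fg A" "length \<delta> \<le> N" "\<beta> \<in> \<eta>"
  shows "fmult \<delta> (map base_letter \<beta>) \<in> decoded \<longleftrightarrow> \<delta> \<in> local_ball \<beta>"
  using assms
proof (induction \<delta> arbitrary: \<beta> rule: rev_induct)
  case Nil
  then show ?case
    using reduced_map_base_eta map_base_in_decoded Omega_Nil[OF Z_in_Omega]
    by (simp add: fmult_Nil_left local_ball_def ball_of_def)
next
  case (snoc t \<delta>)
  have \<beta>: "\<beta> \<in> \<eta>" and \<delta>t: "reduced (\<delta> @ [t])" "length \<delta> < N"
    using snoc.prems by (auto simp: fg_def)
  have \<delta>: "\<delta> \<in> fg A" using snoc.prems(1) \<delta>t by (auto simp: fg_def reduced_append)
  have \<delta>t_eq: "fmult \<delta> [t] = \<delta> @ [t]" using \<delta>t(1) by (rule fmult_snoc)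
  show ?case
  proof (cases "[t] \<in> Z \<beta>")
    case True
    obtain x where x: "fmult [x] \<beta> \<in> \<eta>" "base_letter x = t"
      using extension_letter_exists[OF \<beta> True] by blast
    have "\<delta> @ [t] \<in> local_ball \<beta> \<longleftrightarrow> \<delta> \<in> act [t] (Z \<beta>)"
      using \<delta>t mem_act_iff[OF Z_all_reduced[OF \<beta>], of \<delta> "[t]"] \<delta> \<delta>t_eq
      by (simp add: local_ball_def ball_of_def fg_def)
    also have "\<dots> \<longleftrightarrow> \<delta> \<in> local_ball (fmult [x] \<beta>)"
      using local_ball_extension_letter[OF \<beta> x(1)] x(2) \<delta>t by (simp add: ball_of_def)
    also have "\<dots> \<longleftrightarrow> fmult \<delta> (fmult [t] (map base_letter \<beta>)) \<in> decoded"
      using snoc.IH[OF \<delta> _ x(1)] \<delta>t map_base_extension_letter[OF \<beta> x(1)] x(2) by simp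
    finally show ?thesis by (simp add: \<delta>t_eq flip: fmult_assoc)
  next
    case False
    have "\<delta> @ [t] \<notin> local_ball \<beta>"
    proof
      assume "\<delta> @ [t] \<in> local_ball \<beta>"
      then have "drop (length \<delta>) (\<delta> @ [t]) \<in> Z \<beta>"
        using Omega_drop[OF Z_in_Omega[OF \<beta>]] unfolding local_ball_def ball_of_def by blast
      with False show False by simp
    qed
    moreover have "fmult (\<delta> @ [t]) (map base_letter \<beta>) \<notin> decoded"
      using fmult_snoc_notin_decoded[OF \<beta> False \<delta>t(1)] .
    ultimately show ?thesis by simp
  qed
qed

lemma ball_of_act_decoded:
  assumes "\<beta> \<in> \<eta>"
  shows "ball_of N (act (map base_letter \<beta>) decoded) = local_ball \<beta>"
proof -
  have "map base_letter \<beta> \<in> fg A" using decoded_subset_fg map_base_in_decoded[OF assms] by blast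
  moreover have "local_ball \<beta> \<subseteq> {\<delta> \<in> fg A. length \<delta> \<le> N}"
    using Omega_subset_fg[OF Z_in_Omega[OF assms]] by (auto simp: local_ball_def ball_of_def)
  ultimately show ?thesis
    using ball_of_act[OF decoded_subset_fg] fmult_in_decoded_iff[OF _ _ assms] by blast
qed

lemma phi_word_decoded: "\<beta> \<in> \<eta> \<Longrightarrow> phi_word N decoded (map base_letter \<beta>) = \<beta>"
proof (induction \<beta>)
  case (Cons x \<beta>)
  have \<beta>: "\<beta> \<in> \<eta>" using eta_tl[OF Cons.prems] .
  have "sym_source x = ball_of N (act (map base_letter \<beta>) decoded)"
    using sym_source_extension_letter[OF \<beta>] fmult_hd_eta[OF Cons.prems] Cons.prems
      ball_of_act_decoded[OF \<beta>] by simp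
  moreover have "sym_target x = ball_of N (act (base_letter x # map base_letter \<beta>) decoded)"
    using sym_source_extension_letter[OF Cons.prems, of "inv_letter x"]
      fmult_inv_hd_eta[OF Cons.prems] \<beta> ball_of_act_decoded[OF Cons.prems] by simp
  ultimately have "phi_letter N decoded (base_letter x) (map base_letter \<beta>) = x"
    by (cases x) (auto simp: phi_letter_def Let_def sym_source_def sym_target_def base_letter_def)
  moreover have "reduced (base_letter x # map base_letter \<beta>)"
    using reduced_map_base_eta[OF Cons.prems] by simp
  ultimately show ?case using Cons.IH[OF \<beta>] by (simp add: phi_word_Cons del: phi_word.simps(2))
qed simp

lemma phi_n_decoded: "phi_n N decoded = \<eta>"
  using phi_word_decoded by (simp add: phi_n_def decoded_def image_image)

lemma decoded_in_Omega: "decoded \<in> \<Omega>"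
proof -
  have "ball_of (snd Bn) (act \<alpha> decoded) \<noteq> fst Bn" if Bn: "Bn \<in> F0" and "\<alpha> \<in> decoded" for Bn \<alpha>
  proof -
    obtain \<beta> where \<beta>: "\<beta> \<in> \<eta>" "\<alpha> = map base_letter \<beta>"
      using \<open>\<alpha> \<in> decoded\<close> by (auto simp: decoded_def)
    have "snd Bn \<le> N" using radius_le_N Bn by blast
    then have "ball_of (snd Bn) (act \<alpha> decoded) = ball_of (snd Bn) (act [] (Z \<beta>))"
      using ball_of_act_decoded[OF \<beta>(1)] ball_of_ball_of[of "snd Bn" N] \<beta>(2)
        act_Nil[OF Z_all_reduced[OF \<beta>(1)]] by (metis local_ball_def)
    also have "\<dots> \<noteq> fst Bn"
      using Z_in_Omega[OF \<beta>(1)] Omega_Nil[OF Z_in_Omega[OF \<beta>(1)]] Bn Omega_eq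
      by (auto simp: Omega_F_def avoids_def)
    finally show ?thesis .
  qed
  then show ?thesis using decoded_CC Omega_eq by (simp add: Omega_F_def avoids_def)
qed

lemma eta_in_Omega_n: "\<eta> \<in> Omega_n N \<Omega>"
  using decoded_in_Omega phi_n_decoded by (auto simp: Omega_n_def)

end

context finite_type_subshift
begin

lemma Omega_n_eq_Omega_F: "Omega_n N \<Omega> = Omega_F A' forbidden_1balls"
proof (rule equalityI[OF Omega_n_subset_Omega_F subsetI])
  fix \<eta> assume "\<eta> \<in> Omega_F A' forbidden_1balls"
  then have \<eta>: "\<eta> \<in> CC A'" "\<forall>Bn\<in>forbidden_1balls. avoids \<eta> Bn" by (auto simp: Omega_F_def)
  obtain Z where "\<forall>\<beta>\<in>\<eta>. Z \<beta> \<in> \<Omega> \<and> ball_of 1 (act \<beta> \<eta>) = ball_of 1 (phi_n N (Z \<beta>))"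
    using local_coding_witness[OF \<eta>] by metis
  then interpret locally_coded A \<Omega> F0 N \<eta> Z
    using \<eta>(1) by unfold_locales auto
  show "\<eta> \<in> Omega_n N \<Omega>" by (rule eta_in_Omega_n)
qed

lemma convex_subshift_Omega_n: "convex_subshift A' (Omega_n N \<Omega>)"
  unfolding convex_subshift_def
proof (intro conjI ballI)
  show "Omega_n N \<Omega> \<subseteq> CC A'" using Omega_n_CC by blast
  show "closedin cantor_top (Omega_n N \<Omega>)"
    unfolding Omega_n_eq_Omega_F by (rule closedin_Omega_F[OF finite_nball_alph])
  fix \<eta> \<beta> assume "\<eta> \<in> Omega_n N \<Omega>" "\<beta> \<in> \<eta>"
  then show "act \<beta> \<eta> \<in> Omega_n N \<Omega>" by (rule Omega_n_act)
qed

lemma R_step_1_Omega_n: "R_step 1 A' (Omega_n N \<Omega>)"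
  unfolding R_step_def
  by (intro exI[of _ forbidden_1balls] conjI finite_forbidden_1balls Omega_n_eq_Omega_F)
    (simp add: forbidden_1balls_def)

end

theorem proposition3:
  fixes A :: "'a set" and \<Omega> :: "'a word set set" and n :: nat
  assumes "finite A" and "convex_subshift A \<Omega>" and "n \<ge> 1"
  shows "direct_dyn_equiv (nball_alph n A \<Omega>) (Omega_n n \<Omega>) A \<Omega> psi_n Psi_n \<and>
         (finite_type A \<Omega> \<longrightarrow>
           (\<exists>(A' :: 'a nsym set) \<Omega>' \<phi> \<Psi>. finite A' \<and> convex_subshift A' \<Omega>' \<and>
               R_step 1 A' \<Omega>' \<and> direct_dyn_equiv A' \<Omega>' A \<Omega> \<phi> \<Psi>))"
proof -
  interpret finite_convex_subshift A \<Omega> using assms(1,2) by unfold_locales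
  have "\<exists>(A' :: 'a nsym set) \<Omega>' \<phi> \<Psi>. finite A' \<and> convex_subshift A' \<Omega>' \<and>
      R_step 1 A' \<Omega>' \<and> direct_dyn_equiv A' \<Omega>' A \<Omega> \<phi> \<Psi>" if "finite_type A \<Omega>"
  proof -
    from \<open>finite_type A \<Omega>\<close> obtain F0 where F0: "finite F0" "\<Omega> = Omega_F A F0"
      by (auto simp: finite_type_def)
    then obtain N where "\<forall>Bn\<in>F0. snd Bn \<le> N"
      using finite_nat_set_iff_bounded_le[of "snd ` F0"] by auto
    then interpret finite_type_subshift A \<Omega> F0 N using F0 by unfold_locales
    show ?thesis
      using finite_nball_alph convex_subshift_Omega_n R_step_1_Omega_n direct_dyn_equiv_psi_n
      by blast
  qed
  then show ?thesis using direct_dyn_equiv_psi_n by blast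
qed

end
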